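(* For each prime $p$ let $\Lambda_p:\mathbb{F}_p\to[0,1]$ be $\Lambda_p(m \bmod p)=m/p$ for $m\in\{0,\dots,p-1\}$. The continuous-logic theory of the class of structures $(\mathbb{F}_p,+,\cdot,\Lambda_p)$, $p$ prime, is undecidable.
   Context: Continuous logic (equality discrete, no metric): a basic relation such as $\Lambda$ takes values in a compact subset of $\mathbb{C}$ (here $[0,1]$); formulas are built by continuous connectives, $\sup$/$\inf$ quantifiers and uniform limits; a sentence $\psi$ has a value $\psi^A$ in each structure $A$, lying in a compact set $V_\psi$. The theory of a class $\mathcal{C}$ assigns to each sentence $\psi$ the closure of $\{\psi^A:A\in\mathcal{C}\}$. It is decidable if there is an algorithm which, given a sentence $\psi$ and $\epsilon>0$, outputs a finite set $S\subseteq V_\psi$ such that every value $\psi^A$ ($A$ a model of the theory) is within $\epsilon$ of $S$ and every point of $S$ is within $\epsilon$ of some such value. *)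

theory Defs
  imports "HOL-Analysis.Analysis" "HOL-Computational_Algebra.Primes" "HOL-Library.Nat_Bijection"
begin

datatype recf = Zr | Sc | Id nat | Cn recf "recf list" | Pr recf recf | Mn recf

inductive reval :: "recf \<Rightarrow> nat list \<Rightarrow> nat \<Rightarrow> bool" where
  zero: "reval Zr xs 0"
| succ: "reval Sc [x] (Suc x)"
| proj: "i < length xs \<Longrightarrow> reval (Id i) xs (xs ! i)"
| comp: "length ys = length fs \<Longrightarrow> (\<forall>i < length fs. reval (fs ! i) xs (ys ! i))
          \<Longrightarrow> reval g ys r \<Longrightarrow> reval (Cn g fs) xs r"
| prim0: "reval f xs r \<Longrightarrow> reval (Pr f g) (0 # xs) r"
| primS: "reval (Pr f g) (k # xs) r' \<Longrightarrow> reval g (k # r' # xs) r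
          \<Longrightarrow> reval (Pr f g) (Suc k # xs) r"
| mu: "reval f (k # xs) 0 \<Longrightarrow> (\<forall>j < k. \<exists>r. reval f (j # xs) r \<and> 0 < r)
          \<Longrightarrow> reval (Mn f) xs k"

definition computable :: "(nat \<Rightarrow> nat) \<Rightarrow> bool" where
  "computable f \<longleftrightarrow> (\<exists>c. \<forall>x. reval c [x] (f x))"

datatype tm = V nat | Add tm tm | Mul tm tm

text \<open>Connectives: 1 - x, x/2, truncated subtraction (a generating set dense in all
  continuous connectives on [0,1]); quantifiers sup and inf.\<close>
datatype fm = Eq tm tm | Lam tm | Neg fm | Half fm | Minus fm fm | Sup nat fm | Inf nat fm

primrec tvars :: "tm \<Rightarrow> nat set" where
  "tvars (V i) = {i}"
| "tvars (Add a b) = tvars a \<union> tvars b"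
| "tvars (Mul a b) = tvars a \<union> tvars b"

primrec fvars :: "fm \<Rightarrow> nat set" where
  "fvars (Eq s t) = tvars s \<union> tvars t"
| "fvars (Lam t) = tvars t"
| "fvars (Neg a) = fvars a"
| "fvars (Half a) = fvars a"
| "fvars (Minus a b) = fvars a \<union> fvars b"
| "fvars (Sup x a) = fvars a - {x}"
| "fvars (Inf x a) = fvars a - {x}"

definition sentence :: "fm \<Rightarrow> bool" where
  "sentence \<phi> \<longleftrightarrow> fvars \<phi> = {}"

text \<open>F_p is represented by {0..<p} with arithmetic mod p.\<close>
primrec tval :: "nat \<Rightarrow> (nat \<Rightarrow> nat) \<Rightarrow> tm \<Rightarrow> nat" where
  "tval p \<sigma> (V i) = \<sigma> i mod p"
| "tval p \<sigma> (Add a b) = (tval p \<sigma> a + tval p \<sigma> b) mod p"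
| "tval p \<sigma> (Mul a b) = (tval p \<sigma> a * tval p \<sigma> b) mod p"

definition Lambda :: "nat \<Rightarrow> nat \<Rightarrow> real" where
  "Lambda p m = real (m mod p) / real p"

primrec fval :: "nat \<Rightarrow> (nat \<Rightarrow> nat) \<Rightarrow> fm \<Rightarrow> real" where
  "fval p \<sigma> (Eq s t) = (if tval p \<sigma> s = tval p \<sigma> t then 0 else 1)"
| "fval p \<sigma> (Lam t) = Lambda p (tval p \<sigma> t)"
| "fval p \<sigma> (Neg a) = 1 - fval p \<sigma> a"
| "fval p \<sigma> (Half a) = fval p \<sigma> a / 2"
| "fval p \<sigma> (Minus a b) = max 0 (fval p \<sigma> a - fval p \<sigma> b)"
| "fval p \<sigma> (Sup x a) = Max ((\<lambda>m. fval p (\<sigma>(x := m)) a) ` {0..<p})"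
| "fval p \<sigma> (Inf x a) = Min ((\<lambda>m. fval p (\<sigma>(x := m)) a) ` {0..<p})"

text \<open>Theory of the class {(F_p,+,*,Lambda_p) : p prime}: closure of the value set.\<close>
definition Th_Fp :: "fm \<Rightarrow> real set" where
  "Th_Fp \<psi> = closure {fval p (\<lambda>_. 0) \<psi> | p. prime (p::nat)}"

primrec enc_tm :: "tm \<Rightarrow> nat" where
  "enc_tm (V i) = prod_encode (0, i)"
| "enc_tm (Add a b) = prod_encode (1, prod_encode (enc_tm a, enc_tm b))"
| "enc_tm (Mul a b) = prod_encode (2, prod_encode (enc_tm a, enc_tm b))"

primrec enc_fm :: "fm \<Rightarrow> nat" where
  "enc_fm (Eq s t) = prod_encode (0, prod_encode (enc_tm s, enc_tm t))"
| "enc_fm (Lam t) = prod_encode (1, enc_tm t)"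
| "enc_fm (Neg a) = prod_encode (2, enc_fm a)"
| "enc_fm (Half a) = prod_encode (3, enc_fm a)"
| "enc_fm (Minus a b) = prod_encode (4, prod_encode (enc_fm a, enc_fm b))"
| "enc_fm (Sup x a) = prod_encode (5, prod_encode (x, enc_fm a))"
| "enc_fm (Inf x a) = prod_encode (6, prod_encode (x, enc_fm a))"

definition out_set :: "nat \<Rightarrow> real set" where
  "out_set n = set (map (\<lambda>c. case prod_decode c of (a, b) \<Rightarrow> real a / real (Suc b)) (list_decode n))"

text \<open>Decidability: an algorithm which, on input (sentence psi, k) with eps = 1/(k+1),
  outputs a finite S contained in V_psi = [0,1] that is eps-Hausdorff-close to T(psi).\<close>
definition decidable_th :: "(fm \<Rightarrow> real set) \<Rightarrow> bool" where
  "decidable_th T \<longleftrightarrow> (\<exists>f. computable f \<and>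
     (\<forall>\<psi> k. sentence \<psi> \<longrightarrow>
        (let S = out_set (f (prod_encode (enc_fm \<psi>, k))); \<epsilon> = 1 / real (Suc k) in
          S \<subseteq> {0..1} \<and>
          (\<forall>v\<in>T \<psi>. \<exists>s\<in>S. dist v s \<le> \<epsilon>) \<and>
          (\<forall>s\<in>S. \<exists>v\<in>T \<psi>. dist s v \<le> \<epsilon>))))"

end

theory Submission
  imports Defs "HOL-Number_Theory.Number_Theory"
begin

text \<open>
  Halting of a \<mu>-recursive program on its own code is a \<open>\<Sigma>\<^sub>1\<close> property of \<open>\<nat>\<close>: a halting
  computation has a finite trace of claims that program \<open>c\<close> returns \<open>r\<close> on input \<open>x\<close>, each
  justified by a rule of \<^const>\<open>reval\<close> from earlier claims, and Goedel's beta function codes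
  such a trace by finitely many numbers. A \<open>\<Sigma>\<^sub>1\<close> formula is transcribed into a continuous
  formula over \<open>\<bbbF>\<^sub>p\<close> that quantifies over \<open>{0, \<dots>, p - 1}\<close> and requires every sum and
  product to stay below \<open>p\<close>; \<open>\<Lambda>\<^sub>p\<close> detects wrap-around, since
  \<open>\<Lambda>(s) + \<Lambda>(t) = \<Lambda>(s + t)\<close> exactly when \<open>s + t < p\<close>. The sentence \<open>\<psi>\<^sub>n\<close> saying that \<open>n\<close>
  satisfies the halting formula thus has value \<open>0\<close> in \<open>\<bbbF>\<^sub>p\<close> for all large primes \<open>p\<close> if
  program \<open>n\<close> halts on input \<open>n\<close>, and value \<open>1\<close> in every \<open>\<bbbF>\<^sub>p\<close> otherwise. An algorithm
  approximating the theory within \<open>1/3\<close> would therefore decide self-halting, which the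
  diagonal argument excludes.
\<close>

section \<open>Goedel's beta function\<close>

definition godel_beta :: "nat \<Rightarrow> nat \<Rightarrow> nat \<Rightarrow> nat" where
  "godel_beta a b i = a mod (Suc (Suc i * b))"

lemma godel_beta_moduli_coprime:
  assumes "i < j" "j \<le> M"
  shows "coprime (Suc (Suc i * fact M)) (Suc (Suc j * fact M))"
proof (rule ccontr)
  let ?b = "fact M :: nat"
  assume "\<not> ?thesis"
  hence "gcd (Suc (Suc i * ?b)) (Suc (Suc j * ?b)) \<noteq> 1" using coprime_iff_gcd_eq_1 by blast
  then obtain q where q0: "prime q" "q dvd gcd (Suc (Suc i * ?b)) (Suc (Suc j * ?b))"
    using prime_factor_nat by blast
  hence q: "prime q" "q dvd Suc (Suc i * ?b)" "q dvd Suc (Suc j * ?b)" by auto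
  hence "q dvd Suc (Suc j * ?b) - Suc (Suc i * ?b)" using dvd_diff_nat by blast
  moreover have "Suc (Suc j * ?b) - Suc (Suc i * ?b) = (j - i) * ?b"
    using assms by (simp add: diff_mult_distrib)
  ultimately have "q dvd (j - i) * ?b" by simp
  hence "q dvd (j - i) \<or> q dvd ?b" using q(1) prime_dvd_mult_iff by blast
  moreover have "(j - i) dvd ?b" using assms by (intro dvd_fact) auto
  ultimately have "q dvd ?b" using dvd_trans by blast
  hence "q dvd Suc i * ?b" by simp
  with q(2) have "q dvd 1 + Suc i * ?b" "q dvd Suc i * ?b" by simp_all
  hence "q dvd 1" using dvd_add_right_iff by (metis add.commute)
  with q(1) show False by simp
qed

lemma godel_beta_list: "\<exists>a b. \<forall>k<length vs. godel_beta a b k = vs ! k"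
proof -
  define M where "M = Suc (length vs + sum_list vs)"
  define b where "b = (fact M :: nat)"
  define m where "m = (\<lambda>i. Suc (Suc i * b))"
  have cop: "\<forall>i\<in>{..<length vs}. \<forall>j\<in>{..<length vs}. i \<noteq> j \<longrightarrow> coprime (m i) (m j)"
  proof (intro ballI impI)
    fix i j assume ij: "i \<in> {..<length vs}" "j \<in> {..<length vs}" "i \<noteq> j"
    show "coprime (m i) (m j)"
    proof (cases "i < j")
      case True thus ?thesis using ij unfolding m_def b_def M_def
        by (intro godel_beta_moduli_coprime) auto
    next
      case False hence "j < i" using ij by auto
      thus ?thesis using ij unfolding m_def b_def M_def
        by (subst coprime_commute, intro godel_beta_moduli_coprime) auto
    qed
  qed
  obtain x where x: "\<forall>i\<in>{..<length vs}. [x = vs ! i] (mod m i)"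
    using chinese_remainder_nat[OF _ cop] by blast
  have "M \<le> b" unfolding b_def by (rule fact_ge_self)
  have "\<forall>k<length vs. godel_beta x b k = vs ! k"
  proof (intro allI impI)
    fix k assume k: "k < length vs"
    have "vs ! k \<le> sum_list vs" using k by (simp add: elem_le_sum_list)
    hence "vs ! k < b" using \<open>M \<le> b\<close> unfolding M_def by simp
    moreover have "b \<le> Suc k * b" by simp
    ultimately have "vs ! k < m k" unfolding m_def by linarith
    thus "godel_beta x b k = vs ! k" using x k unfolding godel_beta_def m_def cong_def by simp
  qed
  thus ?thesis by blast
qed

lemma godel_beta_fun: "\<exists>a b. \<forall>k<n. godel_beta a b k = f k"
  using godel_beta_list[of "map f [0..<n]"] by auto

section \<open>Sigma-1 formulas of arithmetic\<close>

text \<open>The semantics is relative to a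
  domain \<open>D\<close> of the quantifiers: all of \<open>\<nat>\<close>, or \<open>{..<p}\<close> with the operations still those
  of \<open>\<nat>\<close>.\<close>

datatype arith_fm = AEq nat nat | ANe nat nat | AAdd nat nat nat | AMul nat nat nat
  | AAnd arith_fm arith_fm | AOr arith_fm arith_fm | AEx nat arith_fm | AAll nat nat arith_fm

primrec arith_vars :: "arith_fm \<Rightarrow> nat set" where
  "arith_vars (AEq a b) = {a, b}"
| "arith_vars (ANe a b) = {a, b}"
| "arith_vars (AAdd a b c) = {a, b, c}"
| "arith_vars (AMul a b c) = {a, b, c}"
| "arith_vars (AAnd A B) = arith_vars A \<union> arith_vars B"
| "arith_vars (AOr A B) = arith_vars A \<union> arith_vars B"
| "arith_vars (AEx x A) = arith_vars A - {x}"
| "arith_vars (AAll x y A) = insert y (arith_vars A - {x})"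

primrec holds :: "(nat \<Rightarrow> bool) \<Rightarrow> (nat \<Rightarrow> nat) \<Rightarrow> arith_fm \<Rightarrow> bool" where
  "holds D \<sigma> (AEq a b) = (\<sigma> a = \<sigma> b)"
| "holds D \<sigma> (ANe a b) = (\<sigma> a \<noteq> \<sigma> b)"
| "holds D \<sigma> (AAdd a b c) = (\<sigma> a + \<sigma> b = \<sigma> c)"
| "holds D \<sigma> (AMul a b c) = (\<sigma> a * \<sigma> b = \<sigma> c)"
| "holds D \<sigma> (AAnd A B) = (holds D \<sigma> A \<and> holds D \<sigma> B)"
| "holds D \<sigma> (AOr A B) = (holds D \<sigma> A \<or> holds D \<sigma> B)"
| "holds D \<sigma> (AEx x A) = (\<exists>w. D w \<and> holds D (\<sigma>(x := w)) A)"
| "holds D \<sigma> (AAll x y A) = (\<forall>t. D t \<longrightarrow> t < \<sigma> y \<longrightarrow> holds D (\<sigma>(x := t)) A)"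

text \<open>The bound of a bounded quantifier must differ from the bound variable, since the
  translation to \<open>\<bbbF>\<^sub>p\<close> refers to both at once.\<close>

primrec wf_arith :: "arith_fm \<Rightarrow> bool" where
  "wf_arith (AEq a b) = True"
| "wf_arith (ANe a b) = True"
| "wf_arith (AAdd a b c) = True"
| "wf_arith (AMul a b c) = True"
| "wf_arith (AAnd A B) = (wf_arith A \<and> wf_arith B)"
| "wf_arith (AOr A B) = (wf_arith A \<and> wf_arith B)"
| "wf_arith (AEx x A) = wf_arith A"
| "wf_arith (AAll x y A) = (x \<noteq> y \<and> wf_arith A)"

lemma holds_cong: "(\<forall>x\<in>arith_vars A. \<sigma> x = \<sigma>' x) \<Longrightarrow> holds D \<sigma> A = holds D \<sigma>' A"
proof (induction A arbitrary: \<sigma> \<sigma>')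
  case (AEx x A)
  have "holds D (\<sigma>(x := w)) A = holds D (\<sigma>'(x := w)) A" for w
    by (rule AEx.IH) (use AEx.prems in auto)
  thus ?case by simp
next
  case (AAll x y A)
  have "holds D (\<sigma>(x := w)) A = holds D (\<sigma>'(x := w)) A" for w
    by (rule AAll.IH) (use AAll.prems in auto)
  moreover have "\<sigma> y = \<sigma>' y" using AAll.prems by simp
  ultimately show ?case by simp
next
  case (AAnd A B)
  then show ?case by (metis UnI1 UnI2 arith_vars.simps(5) holds.simps(5))
next
  case (AOr A B)
  then show ?case by (metis UnI1 UnI2 arith_vars.simps(6) holds.simps(6))
qed auto

lemma holds_bounded_imp_holds:
  "(\<forall>x\<in>arith_vars A. \<sigma> x < p) \<Longrightarrow> holds (\<lambda>x. x < p) \<sigma> A \<Longrightarrow> holds (\<lambda>_. True) \<sigma> A"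
proof (induction A arbitrary: \<sigma>)
  case (AEx x A)
  then obtain w where "w < p" "holds (\<lambda>x. x < p) (\<sigma>(x := w)) A" by auto
  moreover have "\<forall>z\<in>arith_vars A. (\<sigma>(x := w)) z < p" using AEx.prems(1) \<open>w < p\<close> by auto
  ultimately have "holds (\<lambda>_. True) (\<sigma>(x := w)) A" using AEx.IH by blast
  thus ?case by auto
next
  case (AAll x y A)
  have "holds (\<lambda>_. True) (\<sigma>(x := t)) A" if "t < \<sigma> y" for t
  proof -
    have "t < p" using AAll.prems(1) that by simp
    hence "\<forall>z\<in>arith_vars A. (\<sigma>(x := t)) z < p" using AAll.prems(1) by auto
    moreover have "holds (\<lambda>x. x < p) (\<sigma>(x := t)) A" using AAll.prems(2) \<open>t < p\<close> that by simp
    ultimately show ?thesis using AAll.IH by blast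
  qed
  thus ?case by simp
qed auto

lemma eventually_holds_bounded:
  "holds (\<lambda>_. True) \<sigma> A \<Longrightarrow> eventually (\<lambda>p. holds (\<lambda>x. x < p) \<sigma> A) sequentially"
proof (induction A arbitrary: \<sigma>)
  case (AAnd A B)
  thus ?case by (auto intro: eventually_conj)
next
  case (AOr A B)
  then consider "holds (\<lambda>_. True) \<sigma> A" | "holds (\<lambda>_. True) \<sigma> B" by auto
  then show ?case by cases (auto dest!: AOr.IH elim: eventually_mono)
next
  case (AEx x A)
  then obtain w where "holds (\<lambda>_. True) (\<sigma>(x := w)) A" by auto
  with AEx.IH have "eventually (\<lambda>p. holds (\<lambda>x. x < p) (\<sigma>(x := w)) A) sequentially" by blast
  moreover have "eventually (\<lambda>p. w < p) sequentially" by (rule eventually_gt_at_top)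
  ultimately show ?case by eventually_elim auto
next
  case (AAll x y A)
  have "\<forall>t\<in>{..<\<sigma> y}. eventually (\<lambda>p. holds (\<lambda>x. x < p) (\<sigma>(x := t)) A) sequentially"
    using AAll.prems by (auto intro: AAll.IH)
  with finite_lessThan have
    "eventually (\<lambda>p. \<forall>t\<in>{..<\<sigma> y}. holds (\<lambda>x. x < p) (\<sigma>(x := t)) A) sequentially"
    by (rule eventually_ball_finite)
  thus ?case by eventually_elim simp
qed auto


definition sigma1 :: "nat \<Rightarrow> ((nat \<Rightarrow> nat) \<Rightarrow> bool) \<Rightarrow> bool" where
  "sigma1 N R \<longleftrightarrow> (\<exists>A. wf_arith A \<and> arith_vars A \<subseteq> {..<N} \<and> (\<forall>\<sigma>. holds (\<lambda>_. True) \<sigma> A = R \<sigma>))"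

lemma sigma1_cong: "sigma1 N R \<Longrightarrow> (\<And>\<sigma>. R \<sigma> = R' \<sigma>) \<Longrightarrow> sigma1 N R'"
  unfolding sigma1_def by auto

lemma sigma1_eq: "a < N \<Longrightarrow> b < N \<Longrightarrow> sigma1 N (\<lambda>\<sigma>. \<sigma> a = \<sigma> b)"
  unfolding sigma1_def by (intro exI[of _ "AEq a b"]) auto

lemma sigma1_neq: "a < N \<Longrightarrow> b < N \<Longrightarrow> sigma1 N (\<lambda>\<sigma>. \<sigma> a \<noteq> \<sigma> b)"
  unfolding sigma1_def by (intro exI[of _ "ANe a b"]) auto

lemma sigma1_add: "a < N \<Longrightarrow> b < N \<Longrightarrow> c < N \<Longrightarrow> sigma1 N (\<lambda>\<sigma>. \<sigma> c = \<sigma> a + \<sigma> b)"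
  unfolding sigma1_def by (intro exI[of _ "AAdd a b c"]) auto

lemma sigma1_mult: "a < N \<Longrightarrow> b < N \<Longrightarrow> c < N \<Longrightarrow> sigma1 N (\<lambda>\<sigma>. \<sigma> c = \<sigma> a * \<sigma> b)"
  unfolding sigma1_def by (intro exI[of _ "AMul a b c"]) auto

lemma sigma1_conj: "sigma1 N P \<Longrightarrow> sigma1 N Q \<Longrightarrow> sigma1 N (\<lambda>\<sigma>. P \<sigma> \<and> Q \<sigma>)"
  unfolding sigma1_def by (elim exE conjE, rule_tac x="AAnd A Aa" in exI) auto

lemma sigma1_disj: "sigma1 N P \<Longrightarrow> sigma1 N Q \<Longrightarrow> sigma1 N (\<lambda>\<sigma>. P \<sigma> \<or> Q \<sigma>)"
  unfolding sigma1_def by (elim exE conjE, rule_tac x="AOr A Aa" in exI) auto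

text \<open>In the quantifier rules the quantified variable is the next fresh one, \<open>N\<close>; the first
  premise says that the body does not depend on the old value of that variable.\<close>

lemma sigma1_ex:
  assumes "\<And>\<sigma> v w. P w (\<sigma>(N := v)) = P w \<sigma>" "sigma1 (Suc N) (\<lambda>\<sigma>. P (\<sigma> N) \<sigma>)"
  shows "sigma1 N (\<lambda>\<sigma>. \<exists>w. P w \<sigma>)"
proof -
  obtain A where A: "wf_arith A" "arith_vars A \<subseteq> {..<Suc N}" "\<And>\<sigma>. holds (\<lambda>_. True) \<sigma> A = P (\<sigma> N) \<sigma>"
    using assms(2) unfolding sigma1_def by blast
  have "holds (\<lambda>_. True) \<sigma> (AEx N A) = (\<exists>w. P w \<sigma>)" for \<sigma>
    using A(3) assms(1) by simp
  moreover have "wf_arith (AEx N A)" "arith_vars (AEx N A) \<subseteq> {..<N}" using A(1,2) by auto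
  ultimately show ?thesis unfolding sigma1_def by blast
qed

lemma sigma1_all_less:
  assumes "\<And>\<sigma> v w. P w (\<sigma>(N := v)) = P w \<sigma>" "y < N" "sigma1 (Suc N) (\<lambda>\<sigma>. P (\<sigma> N) \<sigma>)"
  shows "sigma1 N (\<lambda>\<sigma>. \<forall>t<\<sigma> y. P t \<sigma>)"
proof -
  obtain A where A: "wf_arith A" "arith_vars A \<subseteq> {..<Suc N}" "\<And>\<sigma>. holds (\<lambda>_. True) \<sigma> A = P (\<sigma> N) \<sigma>"
    using assms(3) unfolding sigma1_def by blast
  have "holds (\<lambda>_. True) \<sigma> (AAll N y A) = (\<forall>t<\<sigma> y. P t \<sigma>)" for \<sigma>
    using A(3) assms(1) by simp
  moreover have "wf_arith (AAll N y A)" "arith_vars (AAll N y A) \<subseteq> {..<N}" using A(1,2) assms(2) by auto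
  ultimately show ?thesis unfolding sigma1_def by blast
qed

primrec rename_vars :: "(nat \<Rightarrow> nat) \<Rightarrow> arith_fm \<Rightarrow> arith_fm" where
  "rename_vars g (AEq a b) = AEq (g a) (g b)"
| "rename_vars g (ANe a b) = ANe (g a) (g b)"
| "rename_vars g (AAdd a b c) = AAdd (g a) (g b) (g c)"
| "rename_vars g (AMul a b c) = AMul (g a) (g b) (g c)"
| "rename_vars g (AAnd A B) = AAnd (rename_vars g A) (rename_vars g B)"
| "rename_vars g (AOr A B) = AOr (rename_vars g A) (rename_vars g B)"
| "rename_vars g (AEx x A) = AEx (g x) (rename_vars g A)"
| "rename_vars g (AAll x y A) = AAll (g x) (g y) (rename_vars g A)"

lemma holds_rename_vars: "inj g \<Longrightarrow> holds D \<sigma> (rename_vars g A) = holds D (\<sigma> \<circ> g) A"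
proof (induction A arbitrary: \<sigma>)
  case (AEx x A)
  have eq: "\<And>w. (\<sigma>(g x := w)) \<circ> g = (\<sigma> \<circ> g)(x := w)"
    using AEx.prems by (auto simp: fun_eq_iff inj_eq)
  have "holds D \<sigma> (rename_vars g (AEx x A)) = (\<exists>w. D w \<and> holds D (\<sigma>(g x := w)) (rename_vars g A))" by simp
  also have "\<dots> = (\<exists>w. D w \<and> holds D ((\<sigma> \<circ> g)(x := w)) A)"
    by (simp only: AEx.IH[OF AEx.prems] eq)
  finally show ?case by (simp add: comp_def)
next
  case (AAll x y A)
  have eq: "\<And>w. (\<sigma>(g x := w)) \<circ> g = (\<sigma> \<circ> g)(x := w)"
    using AAll.prems by (auto simp: fun_eq_iff inj_eq)
  have "holds D \<sigma> (rename_vars g (AAll x y A))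
    = (\<forall>w. D w \<longrightarrow> w < \<sigma> (g y) \<longrightarrow> holds D (\<sigma>(g x := w)) (rename_vars g A))" by simp
  also have "\<dots> = (\<forall>w. D w \<longrightarrow> w < (\<sigma> \<circ> g) y \<longrightarrow> holds D ((\<sigma> \<circ> g)(x := w)) A)"
    by (simp only: AAll.IH[OF AAll.prems] eq comp_apply)
  finally show ?case by (simp add: comp_def)
qed auto

lemma wf_arith_rename_vars: "inj g \<Longrightarrow> wf_arith (rename_vars g A) = wf_arith A"
  by (induction A) (auto simp: inj_eq)

lemma arith_vars_rename_vars: "inj g \<Longrightarrow> arith_vars (rename_vars g A) = g ` arith_vars A"
  by (induction A) (auto simp: inj_eq image_set_diff)

primrec copy_vars :: "nat \<Rightarrow> (nat \<Rightarrow> nat) \<Rightarrow> nat \<Rightarrow> arith_fm \<Rightarrow> arith_fm" where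
  "copy_vars 0 f N C = C"
| "copy_vars (Suc k) f N C = copy_vars k f N (AEx (N + k) (AAnd (AEq (N + k) (f k)) C))"

lemma wf_arith_copy_vars: "wf_arith C \<Longrightarrow> wf_arith (copy_vars k f N C)"
  by (induction k arbitrary: C) auto

lemma holds_copy_vars:
  assumes "\<forall>j<k. f j < N"
  shows "holds (\<lambda>_. True) \<sigma> (copy_vars k f N C) =
     holds (\<lambda>_. True) (\<lambda>x. if N \<le> x \<and> x < N + k then \<sigma> (f (x - N)) else \<sigma> x) C"
  using assms
proof (induction k arbitrary: C)
  case 0
  have "(\<lambda>x. if N \<le> x \<and> x < N + 0 then \<sigma> (f (x - N)) else \<sigma> x) = \<sigma>" by auto
  thus ?case by simp
next
  case (Suc k)
  let ?s = "\<lambda>x. if N \<le> x \<and> x < N + k then \<sigma> (f (x - N)) else \<sigma> x"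
  let ?s' = "\<lambda>x. if N \<le> x \<and> x < N + Suc k then \<sigma> (f (x - N)) else \<sigma> x"
  have fk: "f k < N" using Suc.prems by simp
  have "holds (\<lambda>_. True) \<sigma> (copy_vars (Suc k) f N C) =
     holds (\<lambda>_. True) ?s (AEx (N + k) (AAnd (AEq (N + k) (f k)) C))"
    using Suc by simp
  also have "\<dots> = holds (\<lambda>_. True) (?s(N + k := \<sigma> (f k))) C"
    using fk by auto
  also have "?s(N + k := \<sigma> (f k)) = ?s'" by (auto simp: fun_eq_iff)
  finally show ?case .
qed

lemma arith_vars_copy_vars:
  "arith_vars (copy_vars k f N C) \<subseteq> (arith_vars C - {N..<N + k}) \<union> f ` {..<k}"
proof (induction k arbitrary: C)
  case (Suc k)
  show ?case
    by (simp only: copy_vars.simps) (rule order.trans[OF Suc.IH], auto)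
qed simp

text \<open>Substitution \<open>\<sigma> j \<mapsto> \<sigma> (f j)\<close>: the variables of the defining formula are shifted
  above \<open>N\<close> and then existentially bound to copies of the \<open>\<sigma> (f j)\<close>, so no capture occurs.\<close>

lemma sigma1_subst:
  assumes "sigma1 k R" "\<forall>j<k. f j < N"
  shows "sigma1 N (\<lambda>\<sigma>. R (\<lambda>j. \<sigma> (f j)))"
proof -
  obtain A where A: "arith_vars A \<subseteq> {..<k}" "\<And>\<sigma>. holds (\<lambda>_. True) \<sigma> A = R \<sigma>" "wf_arith A"
    using assms(1) unfolding sigma1_def by blast
  define g where "g = (\<lambda>x::nat. x + N)"
  have ig: "inj g" unfolding g_def by (auto intro: injI)
  define B where "B = copy_vars k f N (rename_vars g A)"
  have "arith_vars (rename_vars g A) \<subseteq> {N..<N + k}" using A(1) arith_vars_rename_vars[OF ig]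
    unfolding g_def by auto
  hence "arith_vars B \<subseteq> {..<N}"
    unfolding B_def using arith_vars_copy_vars[of k f N "rename_vars g A"] assms(2) by auto
  moreover have "wf_arith B"
    unfolding B_def using A(3) wf_arith_rename_vars[OF ig] wf_arith_copy_vars by simp
  moreover have "holds (\<lambda>_. True) \<sigma> B = R (\<lambda>j. \<sigma> (f j))" for \<sigma>
  proof -
    let ?s = "\<lambda>x. if N \<le> x \<and> x < N + k then \<sigma> (f (x - N)) else \<sigma> x"
    have "holds (\<lambda>_. True) \<sigma> B = holds (\<lambda>_. True) (?s \<circ> g) A"
      unfolding B_def using holds_copy_vars[OF assms(2)] holds_rename_vars[OF ig] by simp
    also have "\<dots> = holds (\<lambda>_. True) (\<lambda>j. \<sigma> (f j)) A"
      using A(1) by (intro holds_cong) (auto simp: g_def)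
    finally show ?thesis using A(2) by simp
  qed
  ultimately show ?thesis unfolding sigma1_def by blast
qed

lemma sigma1_inst1: "sigma1 1 (\<lambda>\<sigma>. R (\<sigma> 0)) \<Longrightarrow> a < N \<Longrightarrow> sigma1 N (\<lambda>\<sigma>. R (\<sigma> a))"
  by (drule sigma1_subst[where f = "nth [a]" and N = N]) (auto elim: sigma1_cong)

lemma sigma1_inst2:
  "sigma1 2 (\<lambda>\<sigma>. R (\<sigma> 0) (\<sigma> 1)) \<Longrightarrow> a < N \<Longrightarrow> b < N \<Longrightarrow> sigma1 N (\<lambda>\<sigma>. R (\<sigma> a) (\<sigma> b))"
  by (drule sigma1_subst[where f = "nth [a, b]" and N = N])
    (auto simp: less_Suc_eq numeral_eq_Suc elim: sigma1_cong)

lemma sigma1_inst3: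
  "sigma1 3 (\<lambda>\<sigma>. R (\<sigma> 0) (\<sigma> 1) (\<sigma> 2)) \<Longrightarrow> a < N \<Longrightarrow> b < N \<Longrightarrow> c < N \<Longrightarrow>
    sigma1 N (\<lambda>\<sigma>. R (\<sigma> a) (\<sigma> b) (\<sigma> c))"
  by (drule sigma1_subst[where f = "nth [a, b, c]" and N = N])
    (auto simp: less_Suc_eq numeral_eq_Suc elim: sigma1_cong)

lemma sigma1_inst4:
  "sigma1 4 (\<lambda>\<sigma>. R (\<sigma> 0) (\<sigma> 1) (\<sigma> 2) (\<sigma> 3)) \<Longrightarrow> a < N \<Longrightarrow> b < N \<Longrightarrow> c < N \<Longrightarrow> d < N \<Longrightarrow>
    sigma1 N (\<lambda>\<sigma>. R (\<sigma> a) (\<sigma> b) (\<sigma> c) (\<sigma> d))"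
  by (drule sigma1_subst[where f = "nth [a, b, c, d]" and N = N])
    (auto simp: less_Suc_eq numeral_eq_Suc elim: sigma1_cong)

lemma sigma1_inst10:
  "sigma1 10 (\<lambda>\<sigma>. R (\<sigma> 0) (\<sigma> 1) (\<sigma> 2) (\<sigma> 3) (\<sigma> 4) (\<sigma> 5) (\<sigma> 6) (\<sigma> 7) (\<sigma> 8) (\<sigma> 9)) \<Longrightarrow>
    a < N \<Longrightarrow> b < N \<Longrightarrow> c < N \<Longrightarrow> d < N \<Longrightarrow> e < N \<Longrightarrow> f < N \<Longrightarrow> g < N \<Longrightarrow> h < N \<Longrightarrow> i < N \<Longrightarrow> j < N \<Longrightarrow>
    sigma1 N (\<lambda>\<sigma>. R (\<sigma> a) (\<sigma> b) (\<sigma> c) (\<sigma> d) (\<sigma> e) (\<sigma> f) (\<sigma> g) (\<sigma> h) (\<sigma> i) (\<sigma> j))"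
  by (drule sigma1_subst[where f = "nth [a, b, c, d, e, f, g, h, i, j]" and N = N])
    (auto simp: less_Suc_eq numeral_eq_Suc elim: sigma1_cong)

text \<open>The definability proofs below state a relation in a flattened form, with at most one
  operation per atom, which the following rules and the quantifier rules take apart.\<close>

named_theorems sigma1_intros

declare sigma1_eq[sigma1_intros] sigma1_neq[sigma1_intros]
  sigma1_add[sigma1_intros] sigma1_mult[sigma1_intros]

lemma zero_sigma1: "sigma1 1 (\<lambda>\<sigma>. \<sigma> 0 = 0)"
proof -
  have "sigma1 1 (\<lambda>\<sigma>. \<sigma> 0 = \<sigma> 0 + \<sigma> 0)"
    by (((rule sigma1_ex, simp) | (rule sigma1_all_less, simp, simp) | rule sigma1_conj
      | rule sigma1_disj | (rule sigma1_intros; simp))+)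
  thus ?thesis by (rule sigma1_cong) auto
qed

lemmas sigma1_zero[sigma1_intros] = sigma1_inst1[OF zero_sigma1]

lemma one_sigma1: "sigma1 1 (\<lambda>\<sigma>. \<sigma> 0 = 1)"
proof -
  have flat: "sigma1 1 (\<lambda>\<sigma>. \<sigma> 0 = \<sigma> 0 * \<sigma> 0 \<and> (\<exists>z. z = 0 \<and> \<sigma> 0 \<noteq> z))"
    by (((rule sigma1_ex, simp) | (rule sigma1_all_less, simp, simp) | rule sigma1_conj
      | rule sigma1_disj | (rule sigma1_intros; simp))+)
  show ?thesis
    by (rule sigma1_cong[OF flat]) auto
qed

lemmas sigma1_one[sigma1_intros] = sigma1_inst1[OF one_sigma1]

lemma Suc_sigma1: "sigma1 2 (\<lambda>\<sigma>. \<sigma> 0 = Suc (\<sigma> 1))"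
proof -
  have "sigma1 2 (\<lambda>\<sigma>. \<exists>e. e = 1 \<and> \<sigma> 0 = \<sigma> 1 + e)"
    by (((rule sigma1_ex, simp) | (rule sigma1_all_less, simp, simp) | rule sigma1_conj
      | rule sigma1_disj | (rule sigma1_intros; simp))+)
  thus ?thesis by (rule sigma1_cong) auto
qed

lemmas sigma1_Suc[sigma1_intros] = sigma1_inst2[OF Suc_sigma1]

lemma const_sigma1: "sigma1 1 (\<lambda>\<sigma>. \<sigma> 0 = k)"
proof (induction k)
  case 0
  show ?case by (rule zero_sigma1)
next
  case (Suc k)
  have "sigma1 1 (\<lambda>\<sigma>. \<exists>w. w = k \<and> \<sigma> 0 = Suc w)"
    by (((rule sigma1_ex, simp) | rule sigma1_conj | (rule sigma1_intros; simp)
      | (rule sigma1_inst1[OF Suc.IH]; simp))+)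
  thus ?case by (rule sigma1_cong) auto
qed

lemmas sigma1_const = sigma1_inst1[OF const_sigma1]

lemma less_sigma1: "sigma1 2 (\<lambda>\<sigma>. \<sigma> 0 < \<sigma> 1)"
proof -
  have "sigma1 2 (\<lambda>\<sigma>. \<exists>z. \<sigma> 1 = \<sigma> 0 + z \<and> (\<exists>zz. zz = 0 \<and> z \<noteq> zz))"
    by (((rule sigma1_ex, simp) | (rule sigma1_all_less, simp, simp) | rule sigma1_conj
      | rule sigma1_disj | (rule sigma1_intros; simp))+)
  thus ?thesis by (rule sigma1_cong) (auto, presburger)
qed

lemmas sigma1_less[sigma1_intros] = sigma1_inst2[OF less_sigma1]

lemma prod_encode_sigma1: "sigma1 3 (\<lambda>\<sigma>. \<sigma> 0 = prod_encode (\<sigma> 1, \<sigma> 2))"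
proof -
  have "sigma1 3 (\<lambda>\<sigma>. \<exists>s. s = \<sigma> 1 + \<sigma> 2 \<and> (\<exists>s1. s1 = Suc s \<and> (\<exists>t. t = s * s1 \<and>
      (\<exists>u. u = t + \<sigma> 1 \<and> (\<exists>u2. u2 = u + \<sigma> 1 \<and> u2 = \<sigma> 0 + \<sigma> 0)))))"
    by (((rule sigma1_ex, simp) | (rule sigma1_all_less, simp, simp) | rule sigma1_conj
      | rule sigma1_disj | (rule sigma1_intros; simp))+)
  moreover have "(\<exists>s. s = a + b \<and> (\<exists>s1. s1 = Suc s \<and> (\<exists>t. t = s * s1 \<and>
      (\<exists>u. u = t + a \<and> (\<exists>u2. u2 = u + a \<and> u2 = z + z))))) = (z = prod_encode (a, b))" for a b z
  proof -
    have "2 * triangle (a + b) = (a + b) * Suc (a + b)" unfolding triangle_def by simp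
    thus ?thesis unfolding prod_encode_def by auto
  qed
  ultimately show ?thesis by (rule sigma1_cong)
qed

lemmas sigma1_prod_encode[sigma1_intros] = sigma1_inst3[OF prod_encode_sigma1]

definition ncons :: "nat \<Rightarrow> nat \<Rightarrow> nat" where
  "ncons a l = Suc (prod_encode (a, l))"

lemma list_decode_ncons[simp]: "list_decode (ncons a l) = a # list_decode l"
  unfolding ncons_def by simp

lemma ncons_sigma1: "sigma1 3 (\<lambda>\<sigma>. \<sigma> 0 = ncons (\<sigma> 1) (\<sigma> 2))"
proof -
  have "sigma1 3 (\<lambda>\<sigma>. \<exists>w. w = prod_encode (\<sigma> 1, \<sigma> 2) \<and> \<sigma> 0 = Suc w)"
    by (((rule sigma1_ex, simp) | (rule sigma1_all_less, simp, simp) | rule sigma1_conj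
      | rule sigma1_disj | (rule sigma1_intros; simp))+)
  thus ?thesis by (rule sigma1_cong) (auto simp: ncons_def)
qed

lemmas sigma1_ncons[sigma1_intros] = sigma1_inst3[OF ncons_sigma1]

lemma eq_mod_iff_ex_quotient: "0 < (m::nat) \<Longrightarrow> v = a mod m \<longleftrightarrow> (\<exists>q. a = q * m + v \<and> v < m)"
  by (metis div_mult_mod_eq mod_less mod_less_divisor mod_mult_self3)

lemma godel_beta_sigma1: "sigma1 4 (\<lambda>\<sigma>. \<sigma> 0 = godel_beta (\<sigma> 1) (\<sigma> 2) (\<sigma> 3))"
proof -
  have "sigma1 4 (\<lambda>\<sigma>. \<exists>i1. i1 = Suc (\<sigma> 3) \<and> (\<exists>m0. m0 = i1 * \<sigma> 2 \<and> (\<exists>m. m = Suc m0 \<and>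
      (\<exists>q. \<exists>qm. qm = q * m \<and> \<sigma> 1 = qm + \<sigma> 0 \<and> \<sigma> 0 < m))))"
    by (((rule sigma1_ex, simp) | (rule sigma1_all_less, simp, simp) | rule sigma1_conj
      | rule sigma1_disj | (rule sigma1_intros; simp))+)
  thus ?thesis
    by (rule sigma1_cong) (simp add: godel_beta_def eq_mod_iff_ex_quotient)
qed

lemmas sigma1_godel_beta[sigma1_intros] = sigma1_inst4[OF godel_beta_sigma1]

declare sigma1_const[sigma1_intros]


section \<open>Computation traces\<close>

primrec recf_code :: "recf \<Rightarrow> nat" where
  "recf_code Zr = prod_encode (0, 0)"
| "recf_code Sc = prod_encode (1, 0)"
| "recf_code (Id i) = prod_encode (2, i)"
| "recf_code (Cn g fs) = prod_encode (3, prod_encode (recf_code g, list_encode (map recf_code fs)))"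
| "recf_code (Pr f g) = prod_encode (4, prod_encode (recf_code f, recf_code g))"
| "recf_code (Mn f) = prod_encode (5, recf_code f)"

definition nth_code :: "nat \<Rightarrow> nat \<Rightarrow> nat \<Rightarrow> bool" where
  "nth_code l j v \<longleftrightarrow> j < length (list_decode l) \<and> list_decode l ! j = v"

definition length_code :: "nat \<Rightarrow> nat \<Rightarrow> bool" where
  "length_code l n \<longleftrightarrow> length (list_decode l) = n"

text \<open>A claim \<open>(c, x, r)\<close> says that the program with code \<open>c\<close> returns \<open>r\<close> on the argument list
  with code \<open>x\<close>. \<open>justified Oc c x r\<close> says that one rule of \<^const>\<open>reval\<close> derives the claim
  from claims in \<open>Oc\<close>; it is stated on codes only, so that it is arithmetical.\<close>

definition justified_Cn :: "(nat \<Rightarrow> nat \<Rightarrow> nat \<Rightarrow> bool) \<Rightarrow> nat \<Rightarrow> nat \<Rightarrow> nat \<Rightarrow> bool" where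
  "justified_Cn Oc c x r \<longleftrightarrow> (\<exists>g fl yl L. c = prod_encode (3, prod_encode (g, fl)) \<and>
     length_code fl L \<and> length_code yl L \<and>
     (\<forall>j<L. \<exists>u w. nth_code fl j u \<and> nth_code yl j w \<and> Oc u x w) \<and> Oc g yl r)"

definition justified_Pr :: "(nat \<Rightarrow> nat \<Rightarrow> nat \<Rightarrow> bool) \<Rightarrow> nat \<Rightarrow> nat \<Rightarrow> nat \<Rightarrow> bool" where
  "justified_Pr Oc c x r \<longleftrightarrow> (\<exists>f g. c = prod_encode (4, prod_encode (f, g)) \<and>
     ((\<exists>x'. x = ncons 0 x' \<and> Oc f x' r) \<or>
      (\<exists>n x' r'. x = ncons (Suc n) x' \<and> Oc c (ncons n x') r' \<and> Oc g (ncons n (ncons r' x')) r)))"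

definition justified_Mn :: "(nat \<Rightarrow> nat \<Rightarrow> nat \<Rightarrow> bool) \<Rightarrow> nat \<Rightarrow> nat \<Rightarrow> nat \<Rightarrow> bool" where
  "justified_Mn Oc c x r \<longleftrightarrow> (\<exists>f. c = prod_encode (5, f) \<and>
     Oc f (ncons r x) 0 \<and> (\<forall>j<r. \<exists>r'. 0 < r' \<and> Oc f (ncons j x) r'))"

definition justified :: "(nat \<Rightarrow> nat \<Rightarrow> nat \<Rightarrow> bool) \<Rightarrow> nat \<Rightarrow> nat \<Rightarrow> nat \<Rightarrow> bool" where
  "justified Oc c x r \<longleftrightarrow>
     (c = prod_encode (0, 0) \<and> r = 0)
   \<or> (c = prod_encode (1, 0) \<and> (\<exists>y. x = ncons y 0 \<and> r = Suc y))
   \<or> (\<exists>j. c = prod_encode (2, j) \<and> nth_code x j r)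
   \<or> justified_Cn Oc c x r \<or> justified_Pr Oc c x r \<or> justified_Mn Oc c x r"

lemmas justified_defs = justified_def justified_Cn_def justified_Pr_def justified_Mn_def

lemma justified_Cn_mono:
  assumes "justified_Cn Oc c x r" "\<And>c x r. Oc c x r \<Longrightarrow> Oc' c x r"
  shows "justified_Cn Oc' c x r"
proof -
  obtain g fl yl L where h: "c = prod_encode (3, prod_encode (g, fl))" "length_code fl L"
    "length_code yl L"
     "\<forall>j<L. \<exists>u w. nth_code fl j u \<and> nth_code yl j w \<and> Oc u x w" "Oc g yl r"
    using assms(1) unfolding justified_Cn_def by blast
  have "\<forall>j<L. \<exists>u w. nth_code fl j u \<and> nth_code yl j w \<and> Oc' u x w"
  proof (intro allI impI)
    fix j assume "j < L"
    then obtain u w where "nth_code fl j u" "nth_code yl j w" "Oc u x w" using h(4) by blast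
    thus "\<exists>u w. nth_code fl j u \<and> nth_code yl j w \<and> Oc' u x w" using assms(2) by blast
  qed
  thus ?thesis unfolding justified_Cn_def using h assms(2) by blast
qed

lemma justified_Pr_mono:
  assumes "justified_Pr Oc c x r" "\<And>c x r. Oc c x r \<Longrightarrow> Oc' c x r"
  shows "justified_Pr Oc' c x r"
proof -
  obtain f g where h: "c = prod_encode (4, prod_encode (f, g))"
    "(\<exists>x'. x = ncons 0 x' \<and> Oc f x' r) \<or>
         (\<exists>n x' r'. x = ncons (Suc n) x' \<and> Oc c (ncons n x') r' \<and> Oc g (ncons n (ncons r' x')) r)"
    using assms(1) unfolding justified_Pr_def by blast
  from h(2) show ?thesis
  proof
    assume "\<exists>x'. x = ncons 0 x' \<and> Oc f x' r"
    then obtain x' where "x = ncons 0 x'" "Oc f x' r" by blast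
    thus ?thesis unfolding justified_Pr_def using h(1) assms(2) by blast
  next
    assume "\<exists>n x' r'. x = ncons (Suc n) x' \<and> Oc c (ncons n x') r' \<and> Oc g (ncons n (ncons r' x')) r"
    then obtain n x' r' where "x = ncons (Suc n) x'" "Oc c (ncons n x') r'"
      "Oc g (ncons n (ncons r' x')) r" by blast
    hence "x = ncons (Suc n) x'" "Oc' c (ncons n x') r'" "Oc' g (ncons n (ncons r' x')) r"
      using assms(2) by auto
    thus ?thesis unfolding justified_Pr_def using h(1) by blast
  qed
qed

lemma justified_Mn_mono:
  assumes "justified_Mn Oc c x r" "\<And>c x r. Oc c x r \<Longrightarrow> Oc' c x r"
  shows "justified_Mn Oc' c x r"
proof -
  obtain f where h: "c = prod_encode (5, f)" "Oc f (ncons r x) 0"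
    "\<forall>j<r. \<exists>r'. 0 < r' \<and> Oc f (ncons j x) r'"
    using assms(1) unfolding justified_Mn_def by blast
  have "\<forall>j<r. \<exists>r'. 0 < r' \<and> Oc' f (ncons j x) r'"
  proof (intro allI impI)
    fix j assume "j < r"
    then obtain r' where "0 < r'" "Oc f (ncons j x) r'" using h(3) by blast
    thus "\<exists>r'. 0 < r' \<and> Oc' f (ncons j x) r'" using assms(2) by blast
  qed
  thus ?thesis unfolding justified_Mn_def using h assms(2) by blast
qed

lemma justified_mono:
  assumes "justified Oc c x r" "\<And>c x r. Oc c x r \<Longrightarrow> Oc' c x r"
  shows "justified Oc' c x r"
proof -
  have "justified_Cn Oc c x r \<Longrightarrow> justified_Cn Oc' c x r"
    "justified_Pr Oc c x r \<Longrightarrow> justified_Pr Oc' c x r"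
      "justified_Mn Oc c x r \<Longrightarrow> justified_Mn Oc' c x r"
    using justified_Cn_mono justified_Pr_mono justified_Mn_mono assms(2) by blast+
  thus ?thesis using assms(1) unfolding justified_def by argo
qed

definition valid_trace :: "(nat \<times> nat \<times> nat) list \<Rightarrow> bool" where
  "valid_trace L \<longleftrightarrow>
     (\<forall>i<length L. case L ! i of (c, x, r) \<Rightarrow> justified (\<lambda>c x r. (c, x, r) \<in> set (take i L)) c x r)"

lemma valid_traceD:
  "valid_trace L \<Longrightarrow> i < length L \<Longrightarrow> L ! i = (c, x, r) \<Longrightarrow>
    justified (\<lambda>c x r. (c, x, r) \<in> set (take i L)) c x r"
  unfolding valid_trace_def by fastforce

definition derivable :: "nat \<Rightarrow> nat \<Rightarrow> nat \<Rightarrow> bool" where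
  "derivable c x r \<longleftrightarrow> (\<exists>L. valid_trace L \<and> (c, x, r) \<in> set L)"

lemma justified_sound:
  assumes sound: "\<And>C x r. Oc (recf_code C) x r \<Longrightarrow> reval C (list_decode x) r"
    and "justified Oc (recf_code C) x r"
  shows "reval C (list_decode x) r"
  using assms(2)
proof (cases C)
  case (Cn G FS)
  with assms(2) obtain yl where yl: "length (list_decode yl) = length FS"
    "\<forall>j<length FS. Oc (recf_code (FS ! j)) x (list_decode yl ! j)" "Oc (recf_code G) yl r"
    by (auto simp: justified_defs length_code_def nth_code_def)
  show ?thesis unfolding Cn
    by (rule reval.comp[of "list_decode yl"]) (use yl in \<open>auto intro: sound\<close>)
next
  case (Pr F G)
  with assms(2) consider x' where "x = ncons 0 x'" "Oc (recf_code F) x' r"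
    | n x' r' where "x = ncons (Suc n) x'" "Oc (recf_code (Pr F G)) (ncons n x') r'"
      "Oc (recf_code G) (ncons n (ncons r' x')) r"
    by (auto simp: justified_defs)
  then show ?thesis
  proof cases
    case 1
    then show ?thesis using Pr by (auto dest: sound intro: reval.prim0)
  next
    case 2
    have "reval (Pr F G) (n # list_decode x') r'" using sound[OF 2(2)] by simp
    moreover have "reval G (n # r' # list_decode x') r" using sound[OF 2(3)] by simp
    ultimately show ?thesis using 2(1) Pr by (auto intro: reval.primS)
  qed
next
  case (Mn F)
  with assms(2) have "Oc (recf_code F) (ncons r x) 0"
    "\<forall>j<r. \<exists>r'. 0 < r' \<and> Oc (recf_code F) (ncons j x) r'"
    by (auto simp: justified_defs)
  then show ?thesis
    using Mn by (fastforce dest: sound intro: reval.mu)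
qed (auto simp: justified_defs nth_code_def intro: reval.intros)

lemma valid_trace_sound:
  assumes "valid_trace L" "(recf_code C, x, r) \<in> set L"
  shows "reval C (list_decode x) r"
proof -
  have "reval C (list_decode x) r" if "i < length L" "L ! i = (recf_code C, x, r)" for i C x r
    using that
  proof (induction i arbitrary: C x r rule: less_induct)
    case (less i)
    have "justified (\<lambda>c x r. (c, x, r) \<in> set (take i L)) (recf_code C) x r"
      using valid_traceD[OF assms(1) less.prems] .
    moreover have "reval C' (list_decode x') r'" if "(recf_code C', x', r') \<in> set (take i L)"
      for C' x' r'
      using that less.prems(1) by (auto simp: in_set_conv_nth intro: less.IH)
    ultimately show ?case by (rule justified_sound[rotated])
  qed
  with assms(2) show ?thesis by (auto simp: in_set_conv_nth)
qed

lemma valid_trace_append: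
  assumes "valid_trace A" "valid_trace B"
  shows "valid_trace (A @ B)"
  unfolding valid_trace_def
proof (intro allI impI)
  fix i assume i: "i < length (A @ B)"
  show "case (A @ B) ! i of (c, x, r) \<Rightarrow> justified (\<lambda>c x r. (c, x, r) \<in> set (take i (A @ B))) c x r"
  proof (cases "i < length A")
    case True
    then show ?thesis using assms(1) by (simp add: valid_trace_def nth_append)
  next
    case False
    with i assms(2) have "case B ! (i - length A) of (c, x, r) \<Rightarrow>
        justified (\<lambda>c x r. (c, x, r) \<in> set (take (i - length A) B)) c x r"
      by (simp add: valid_trace_def)
    with False show ?thesis
      by (auto simp: nth_append split: prod.splits elim!: justified_mono)
  qed
qed

lemma valid_trace_concat: "(\<And>L. L \<in> set Ls \<Longrightarrow> valid_trace L) \<Longrightarrow> valid_trace (concat Ls)"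
proof (induction Ls)
  case Nil
  show ?case by (simp add: valid_trace_def)
next
  case (Cons L Ls)
  then show ?case by (simp add: valid_trace_append)
qed

lemma valid_trace_snoc:
  assumes "valid_trace A" "justified (\<lambda>c x r. (c, x, r) \<in> set A) c x r"
  shows "valid_trace (A @ [(c, x, r)])"
  using assms unfolding valid_trace_def by (auto simp: nth_append less_Suc_eq)

text \<open>Concatenate the traces of the finitely many premises and append the claim.\<close>

lemma derivable_step:
  assumes "finite F" "\<forall>(c, x, r)\<in>F. derivable c x r" "justified (\<lambda>c x r. (c, x, r) \<in> F) c x r"
  shows "derivable c x r"
proof -
  obtain ts where ts: "set ts = F" using finite_list[OF assms(1)] by blast
  have "\<exists>L. valid_trace L \<and> t \<in> set L" if "t \<in> F" for t
    using assms(2) that unfolding derivable_def by (cases t) auto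
  then obtain T where T: "\<And>t. t \<in> F \<Longrightarrow> valid_trace (T t) \<and> t \<in> set (T t)" by metis
  define A where "A = concat (map T ts)"
  have "valid_trace A" unfolding A_def using T ts by (intro valid_trace_concat) auto
  moreover have "justified (\<lambda>c x r. (c, x, r) \<in> set A) c x r"
  proof (rule justified_mono[OF assms(3)])
    fix c' x' r' assume "(c', x', r') \<in> F"
    with T ts show "(c', x', r') \<in> set A" unfolding A_def by fastforce
  qed
  ultimately have "valid_trace (A @ [(c, x, r)])" by (rule valid_trace_snoc)
  then show ?thesis unfolding derivable_def by auto
qed


lemma justified_CnI:
  assumes "length ys = length fs" "\<forall>i<length fs. Oc (recf_code (fs ! i)) x (ys ! i)"
    "Oc (recf_code g) (list_encode ys) r"
  shows "justified Oc (recf_code (Cn g fs)) x r"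
  unfolding justified_def justified_Cn_def using assms
  by (intro disjI2 disjI1 exI[of _ "length fs"] exI conjI)
    (auto simp: length_code_def nth_code_def)

lemma justified_Pr0I:
  "Oc (recf_code f) (list_encode xs) r \<Longrightarrow> justified Oc (recf_code (Pr f g)) (list_encode (0 # xs)) r"
  unfolding justified_def justified_Pr_def by (simp add: ncons_def)

lemma justified_PrSI:
  "Oc (recf_code (Pr f g)) (list_encode (k # xs)) r'
    \<Longrightarrow> Oc (recf_code g) (list_encode (k # r' # xs)) r \<Longrightarrow>
    justified Oc (recf_code (Pr f g)) (list_encode (Suc k # xs)) r"
  unfolding justified_def justified_Pr_def by (simp add: ncons_def) blast

lemma justified_MnI:
  "Oc (recf_code f) (list_encode (k # xs)) 0
    \<Longrightarrow> \<forall>j<k. \<exists>r. 0 < r \<and> Oc (recf_code f) (list_encode (j # xs)) r \<Longrightarrow>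
    justified Oc (recf_code (Mn f)) (list_encode xs) k"
  unfolding justified_def justified_Mn_def by (simp add: ncons_def)

lemma derivable_from_empty: "justified (\<lambda>_ _ _. False) c x r \<Longrightarrow> derivable c x r"
  by (rule derivable_step[of "{}"]) simp_all

lemma reval_imp_derivable: "reval C xs r \<Longrightarrow> derivable (recf_code C) (list_encode xs) r"
proof (induction rule: reval.induct)
  case (zero xs)
  show ?case by (rule derivable_from_empty) (simp add: justified_def)
next
  case (succ x)
  show ?case by (rule derivable_from_empty) (simp add: justified_def ncons_def)
next
  case (proj i xs)
  show ?case by (rule derivable_from_empty) (simp add: justified_def nth_code_def proj)
next
  case (comp ys fs xs g r)
  let ?F = "insert (recf_code g, list_encode ys, r)
    ((\<lambda>i. (recf_code (fs ! i), list_encode xs, ys ! i)) ` {..<length fs})"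
  have "justified (\<lambda>c x r. (c, x, r) \<in> ?F) (recf_code (Cn g fs)) (list_encode xs) r"
    by (rule justified_CnI[OF comp.hyps(1)]) auto
  moreover have "\<forall>(c, x, r)\<in>?F. derivable c x r" using comp.IH by auto
  ultimately show ?case by (intro derivable_step[of ?F]) auto
next
  case (prim0 f xs r g)
  let ?F = "{(recf_code f, list_encode xs, r)}"
  have "justified (\<lambda>c x r. (c, x, r) \<in> ?F) (recf_code (Pr f g)) (list_encode (0 # xs)) r"
    by (rule justified_Pr0I) simp
  then show ?case using prim0.IH by (intro derivable_step[of ?F]) auto
next
  case (primS f g k xs r' r)
  let ?F = "{(recf_code (Pr f g), list_encode (k # xs), r'),
    (recf_code g, list_encode (k # r' # xs), r)}"
  have "justified (\<lambda>c x r. (c, x, r) \<in> ?F) (recf_code (Pr f g)) (list_encode (Suc k # xs)) r"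
    by (rule justified_PrSI[of _ f g k xs r']) simp_all
  then show ?case using primS.IH by (intro derivable_step[of ?F]) auto
next
  case (mu f k xs)
  from mu.IH(2) obtain R where R:
    "\<forall>j<k. 0 < R j \<and> derivable (recf_code f) (list_encode (j # xs)) (R j)"
    by metis
  let ?F = "insert (recf_code f, list_encode (k # xs), 0)
    ((\<lambda>j. (recf_code f, list_encode (j # xs), R j)) ` {..<k})"
  have "justified (\<lambda>c x r. (c, x, r) \<in> ?F) (recf_code (Mn f)) (list_encode xs) k"
    by (rule justified_MnI) (simp, use R in blast)
  moreover have "\<forall>(c, x, r)\<in>?F. derivable c x r" using mu.IH(1) R by force
  ultimately show ?case by (intro derivable_step[of ?F]) auto
qed

definition self_halting :: "nat \<Rightarrow> bool" where
  "self_halting n \<longleftrightarrow> (\<exists>r. derivable n (ncons n 0) r)"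

lemma self_halting_recf_code: "self_halting (recf_code C) \<longleftrightarrow> (\<exists>r. reval C [recf_code C] r)"
proof -
  have "derivable (recf_code C) (ncons (recf_code C) 0) r \<longleftrightarrow> reval C [recf_code C] r" for r
  proof
    assume "derivable (recf_code C) (ncons (recf_code C) 0) r"
    then show "reval C [recf_code C] r"
      unfolding derivable_def using valid_trace_sound by fastforce
  next
    assume "reval C [recf_code C] r"
    then have "derivable (recf_code C) (list_encode [recf_code C]) r" by (rule reval_imp_derivable)
    then show "derivable (recf_code C) (ncons (recf_code C) 0) r" by (simp add: ncons_def)
  qed
  then show ?thesis unfolding self_halting_def by blast
qed

definition tail_chain :: "(nat \<Rightarrow> nat) \<Rightarrow> nat \<Rightarrow> bool" where
  "tail_chain s j \<longleftrightarrow> (\<forall>k<j. \<exists>x t. s k = ncons x t \<and> s (Suc k) = t)"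

lemma tail_chain_drop:
  assumes "tail_chain s j" "k \<le> j"
  shows "list_decode (s k) = drop k (list_decode (s 0))"
  using assms(2)
proof (induction k)
  case (Suc k)
  then have "k < j" by simp
  then obtain x where "s k = ncons x (s (Suc k))"
    using assms(1) unfolding tail_chain_def by blast
  with Suc show ?case by (simp add: drop_Suc tl_drop[symmetric]) (metis list.sel(3))
qed simp

lemma tail_chain_length:
  assumes "tail_chain s j"
  shows "j \<le> length (list_decode (s 0))"
proof (cases j)
  case (Suc k)
  then obtain x t where "s k = ncons x t" using assms unfolding tail_chain_def by blast
  then have "drop k (list_decode (s 0)) = x # list_decode t"
    using tail_chain_drop[OF assms, of k] Suc by simp
  with Suc show ?thesis by (metis Suc_leI drop_eq_Nil list.distinct(1) not_le)
qed simp

lemma tail_chain_godel_beta: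
  assumes "j \<le> length (list_decode l)"
  obtains a b where "godel_beta a b 0 = l" "tail_chain (godel_beta a b) j"
    "godel_beta a b j = list_encode (drop j (list_decode l))"
proof -
  define s where "s k = list_encode (drop k (list_decode l))" for k
  obtain a b where ab: "\<forall>k<Suc j. godel_beta a b k = s k" using godel_beta_fun by blast
  have "drop k (list_decode l) = list_decode l ! k # drop (Suc k) (list_decode l)" if "k < j" for k
    using that assms by (simp add: Cons_nth_drop_Suc)
  then have "tail_chain (godel_beta a b) j"
    unfolding tail_chain_def using ab by (auto simp: s_def ncons_def)
  moreover have "godel_beta a b 0 = l" "godel_beta a b j = s j" using ab by (auto simp: s_def)
  ultimately show ?thesis using that unfolding s_def by blast
qed

lemma nth_code_iff_godel_beta:
  "nth_code l j v \<longleftrightarrow>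
    (\<exists>a b. godel_beta a b 0 = l \<and> tail_chain (godel_beta a b) j \<and> (\<exists>t. godel_beta a b j = ncons v t))"
proof
  assume "nth_code l j v"
  then have "j \<le> length (list_decode l)" "drop j (list_decode l) = v # drop (Suc j) (list_decode l)"
    unfolding nth_code_def by (auto simp: Cons_nth_drop_Suc)
  then show "\<exists>a b. godel_beta a b 0 = l \<and> tail_chain (godel_beta a b) j
    \<and> (\<exists>t. godel_beta a b j = ncons v t)"
    by (metis tail_chain_godel_beta list_encode.simps(2) ncons_def)
next
  assume "\<exists>a b. godel_beta a b 0 = l \<and> tail_chain (godel_beta a b) j
    \<and> (\<exists>t. godel_beta a b j = ncons v t)"
  then obtain a b t where "godel_beta a b 0 = l" "tail_chain (godel_beta a b) j"
    "godel_beta a b j = ncons v t"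
    by blast
  then have "drop j (list_decode l) = v # list_decode t"
    using tail_chain_drop[of "godel_beta a b" j j] by simp
  then show "nth_code l j v" unfolding nth_code_def
    by (metis Cons_nth_drop_Suc drop_all list.distinct(1) list.inject not_le_imp_less)
qed

lemma length_code_iff_godel_beta:
  "length_code l n
    \<longleftrightarrow> (\<exists>a b. godel_beta a b 0 = l \<and> tail_chain (godel_beta a b) n \<and> godel_beta a b n = 0)"
proof
  assume "length_code l n"
  then show "\<exists>a b. godel_beta a b 0 = l \<and> tail_chain (godel_beta a b) n \<and> godel_beta a b n = 0"
    unfolding length_code_def
      by (metis order_refl tail_chain_godel_beta drop_all list_encode.simps(1))
next
  assume "\<exists>a b. godel_beta a b 0 = l \<and> tail_chain (godel_beta a b) n \<and> godel_beta a b n = 0"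
  then obtain a b where "godel_beta a b 0 = l" "tail_chain (godel_beta a b) n"
    "godel_beta a b n = 0"
    by blast
  then show "length_code l n" unfolding length_code_def
    using tail_chain_drop[of "godel_beta a b" n n] tail_chain_length[of "godel_beta a b" n] by simp
qed

lemma godel_beta_sigma1': "sigma1 4 (\<lambda>\<sigma>. godel_beta (\<sigma> 1) (\<sigma> 2) (\<sigma> 3) = \<sigma> 0)"
  using godel_beta_sigma1 by (rule sigma1_cong) auto

lemmas sigma1_godel_beta'[sigma1_intros] = sigma1_inst4[OF godel_beta_sigma1']

lemma nth_code_sigma1: "sigma1 3 (\<lambda>\<sigma>. nth_code (\<sigma> 0) (\<sigma> 1) (\<sigma> 2))"
proof -
  have "sigma1 3 (\<lambda>\<sigma>. \<exists>a b. (\<exists>z. z = 0 \<and> godel_beta a b z = \<sigma> 0) \<and>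
     (\<forall>k<\<sigma> 1. \<exists>x t. (\<exists>y. y = godel_beta a b k \<and> y = ncons x t) \<and> (\<exists>k1. k1 = Suc k \<and>
        godel_beta a b k1 = t)) \<and>
     (\<exists>t y. y = godel_beta a b (\<sigma> 1) \<and> y = ncons (\<sigma> 2) t))"
    by (((rule sigma1_ex, simp) | (rule sigma1_all_less, simp, simp) | rule sigma1_conj
      | rule sigma1_disj | (rule sigma1_intros; simp))+)
  thus ?thesis by (rule sigma1_cong) (simp add: nth_code_iff_godel_beta tail_chain_def)
qed

lemmas sigma1_nth_code[sigma1_intros] = sigma1_inst3[OF nth_code_sigma1]

lemma length_code_sigma1: "sigma1 2 (\<lambda>\<sigma>. length_code (\<sigma> 0) (\<sigma> 1))"
proof -
  have "sigma1 2 (\<lambda>\<sigma>. \<exists>a b. (\<exists>z. z = 0 \<and> godel_beta a b z = \<sigma> 0) \<and>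
     (\<forall>k<\<sigma> 1. \<exists>x t. (\<exists>y. y = godel_beta a b k \<and> y = ncons x t) \<and> (\<exists>k1. k1 = Suc k \<and>
        godel_beta a b k1 = t)) \<and>
     (\<exists>z. z = 0 \<and> godel_beta a b (\<sigma> 1) = z))"
    by (((rule sigma1_ex, simp) | (rule sigma1_all_less, simp, simp) | rule sigma1_conj
      | rule sigma1_disj | (rule sigma1_intros; simp))+)
  thus ?thesis by (rule sigma1_cong) (simp add: length_code_iff_godel_beta tail_chain_def)
qed

lemmas sigma1_length_code[sigma1_intros] = sigma1_inst2[OF length_code_sigma1]

text \<open>A trace of length \<open>m\<close> is coded by the three pairs \<open>(a\<^sub>i, b\<^sub>i)\<close> whose beta sequences
  list the three components of its claims.\<close>

definition occurs_before_beta ::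
    "nat \<Rightarrow> nat \<Rightarrow> nat \<Rightarrow> nat \<Rightarrow> nat \<Rightarrow> nat \<Rightarrow> nat \<Rightarrow> nat \<Rightarrow> nat \<Rightarrow> nat \<Rightarrow> bool" where
  "occurs_before_beta a1 b1 a2 b2 a3 b3 i u x w \<longleftrightarrow>
     (\<exists>k<i. godel_beta a1 b1 k = u \<and> godel_beta a2 b2 k = x \<and> godel_beta a3 b3 k = w)"

abbreviation (input) occurs_before_beta_at :: "(nat \<Rightarrow> nat) \<Rightarrow> nat \<Rightarrow> nat \<Rightarrow> nat \<Rightarrow> bool" where
  "occurs_before_beta_at \<sigma> \<equiv> occurs_before_beta (\<sigma> 0) (\<sigma> 1) (\<sigma> 2) (\<sigma> 3) (\<sigma> 4) (\<sigma> 5) (\<sigma> 6)"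

lemma occurs_before_beta_sigma1: "sigma1 10 (\<lambda>\<sigma>. occurs_before_beta_at \<sigma> (\<sigma> 7) (\<sigma> 8) (\<sigma> 9))"
proof -
  have "sigma1 10 (\<lambda>\<sigma>. \<exists>k. k < \<sigma> 6 \<and> godel_beta (\<sigma> 0) (\<sigma> 1) k = \<sigma> 7 \<and> godel_beta (\<sigma> 2) (\<sigma> 3) k = \<sigma> 8
    \<and> godel_beta (\<sigma> 4) (\<sigma> 5) k = \<sigma> 9)"
    by (((rule sigma1_ex, simp) | (rule sigma1_all_less, simp, simp) | rule sigma1_conj
      | rule sigma1_disj | (rule sigma1_intros; simp))+)
  thus ?thesis by (rule sigma1_cong) (simp add: occurs_before_beta_def)
qed
lemmas sigma1_occurs_before_beta[sigma1_intros] = sigma1_inst10[OF occurs_before_beta_sigma1]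

lemma justified_Cn_sigma1:
  "sigma1 10 (\<lambda>\<sigma>. justified_Cn (occurs_before_beta_at \<sigma>) (\<sigma> 7) (\<sigma> 8) (\<sigma> 9))"
proof -
  have "sigma1 10 (\<lambda>\<sigma>. \<exists>g fl yl L. (\<exists>t p. t = 3 \<and> p = prod_encode (g, fl)
    \<and> \<sigma> 7 = prod_encode (t, p)) \<and>
     length_code fl L \<and> length_code yl L \<and> (\<forall>j<L. \<exists>u w. nth_code fl j u \<and> nth_code yl j w \<and>
       occurs_before_beta_at \<sigma> u (\<sigma> 8) w) \<and>
     occurs_before_beta_at \<sigma> g yl (\<sigma> 9))"
    by (((rule sigma1_ex, simp) | (rule sigma1_all_less, simp, simp) | rule sigma1_conj
      | rule sigma1_disj | (rule sigma1_intros; simp))+)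
  thus ?thesis by (rule sigma1_cong) (simp add: justified_Cn_def)
qed
lemmas sigma1_justified_Cn[sigma1_intros] = sigma1_inst10[OF justified_Cn_sigma1]

lemma justified_Pr_sigma1:
  "sigma1 10 (\<lambda>\<sigma>. justified_Pr (occurs_before_beta_at \<sigma>) (\<sigma> 7) (\<sigma> 8) (\<sigma> 9))"
proof -
  have "sigma1 10 (\<lambda>\<sigma>. \<exists>f g. (\<exists>t p. t = 4 \<and> p = prod_encode (f, g) \<and> \<sigma> 7 = prod_encode (t, p)) \<and>
     ((\<exists>x'. (\<exists>z. z = 0 \<and> \<sigma> 8 = ncons z x') \<and> occurs_before_beta_at \<sigma> f x' (\<sigma> 9)) \<or>
      (\<exists>n x' r'. (\<exists>n1. n1 = Suc n \<and> \<sigma> 8 = ncons n1 x') \<and> (\<exists>y. y = ncons n x' \<and> occurs_before_beta_at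
        \<sigma> (\<sigma> 7) y r') \<and>
         (\<exists>y1 y2. y1 = ncons r' x' \<and> y2 = ncons n y1 \<and> occurs_before_beta_at \<sigma> g y2 (\<sigma> 9)))))"
    by (((rule sigma1_ex, simp) | (rule sigma1_all_less, simp, simp) | rule sigma1_conj
      | rule sigma1_disj | (rule sigma1_intros; simp))+)
  thus ?thesis by (rule sigma1_cong) (simp add: justified_Pr_def)
qed
lemmas sigma1_justified_Pr[sigma1_intros] = sigma1_inst10[OF justified_Pr_sigma1]

lemma justified_Mn_sigma1:
  "sigma1 10 (\<lambda>\<sigma>. justified_Mn (occurs_before_beta_at \<sigma>) (\<sigma> 7) (\<sigma> 8) (\<sigma> 9))"
proof -
  have "sigma1 10 (\<lambda>\<sigma>. \<exists>f. (\<exists>t. t = 5 \<and> \<sigma> 7 = prod_encode (t, f)) \<and>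
     (\<exists>y z. y = ncons (\<sigma> 9) (\<sigma> 8) \<and> z = 0 \<and> occurs_before_beta_at \<sigma> f y z) \<and>
     (\<forall>j<\<sigma> 9. \<exists>r'. (\<exists>z. z = 0 \<and> z < r') \<and> (\<exists>y. y = ncons j (\<sigma> 8) \<and> occurs_before_beta_at \<sigma> f y r')))"
    by (((rule sigma1_ex, simp) | (rule sigma1_all_less, simp, simp) | rule sigma1_conj
      | rule sigma1_disj | (rule sigma1_intros; simp))+)
  thus ?thesis by (rule sigma1_cong) (simp add: justified_Mn_def)
qed
lemmas sigma1_justified_Mn[sigma1_intros] = sigma1_inst10[OF justified_Mn_sigma1]

lemma justified_sigma1: "sigma1 10 (\<lambda>\<sigma>. justified (occurs_before_beta_at \<sigma>) (\<sigma> 7) (\<sigma> 8) (\<sigma> 9))"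
proof -
  have "sigma1 10 (\<lambda>\<sigma>. ((\<exists>z. z = 0 \<and> \<sigma> 7 = prod_encode (z, z)) \<and> \<sigma> 9 = 0) \<or>
     ((\<exists>t z. t = 1 \<and> z = 0 \<and> \<sigma> 7 = prod_encode (t, z)) \<and> (\<exists>y z. z = 0 \<and> \<sigma> 8 = ncons y z \<and> \<sigma> 9 = Suc y)) \<or>
     (\<exists>j t. t = 2 \<and> \<sigma> 7 = prod_encode (t, j) \<and> nth_code (\<sigma> 8) j (\<sigma> 9)) \<or>
     justified_Cn (occurs_before_beta_at \<sigma>) (\<sigma> 7) (\<sigma> 8) (\<sigma> 9) \<or> justified_Pr (occurs_before_beta_at
       \<sigma>) (\<sigma> 7) (\<sigma> 8) (\<sigma> 9) \<or> justified_Mn (occurs_before_beta_at \<sigma>) (\<sigma> 7) (\<sigma> 8) (\<sigma> 9))"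
    by (((rule sigma1_ex, simp) | (rule sigma1_all_less, simp, simp) | rule sigma1_conj
      | rule sigma1_disj | (rule sigma1_intros; simp))+)
  thus ?thesis by (rule sigma1_cong) (simp add: justified_def)
qed
lemmas sigma1_justified[sigma1_intros] = sigma1_inst10[OF justified_sigma1]

lemma set_take_eq_occurs_before_beta:
  assumes "\<forall>k<length L. L ! k = (godel_beta a1 b1 k, godel_beta a2 b2 k, godel_beta a3 b3 k)"
    "i \<le> length L"
  shows "(\<lambda>c x r. (c, x, r) \<in> set (take i L)) = occurs_before_beta a1 b1 a2 b2 a3 b3 i"
  using assms by (fastforce simp: occurs_before_beta_def in_set_conv_nth)

definition beta_derivable :: "nat \<Rightarrow> nat \<Rightarrow> nat \<Rightarrow> bool" where
  "beta_derivable c x r \<longleftrightarrow> (\<exists>a1 b1 a2 b2 a3 b3 m i. i < m \<and>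
     (\<forall>i'<m. justified (occurs_before_beta a1 b1 a2 b2 a3 b3 i')
        (godel_beta a1 b1 i') (godel_beta a2 b2 i') (godel_beta a3 b3 i')) \<and>
     godel_beta a1 b1 i = c \<and> godel_beta a2 b2 i = x \<and> godel_beta a3 b3 i = r)"

lemma derivable_imp_beta_derivable:
  assumes "derivable c x r"
  shows "beta_derivable c x r"
proof -
  from assms obtain L i where L: "valid_trace L" "i < length L" "L ! i = (c, x, r)"
    unfolding derivable_def by (auto simp: in_set_conv_nth)
  obtain a1 b1 where 1: "\<forall>k<length L. godel_beta a1 b1 k = fst (L ! k)"
    using godel_beta_fun[of "length L" "\<lambda>k. fst (L ! k)"] by blast
  obtain a2 b2 where 2: "\<forall>k<length L. godel_beta a2 b2 k = fst (snd (L ! k))"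
    using godel_beta_fun[of "length L" "\<lambda>k. fst (snd (L ! k))"] by blast
  obtain a3 b3 where 3: "\<forall>k<length L. godel_beta a3 b3 k = snd (snd (L ! k))"
    using godel_beta_fun[of "length L" "\<lambda>k. snd (snd (L ! k))"] by blast
  have L_beta: "\<forall>k<length L. L ! k = (godel_beta a1 b1 k, godel_beta a2 b2 k, godel_beta a3 b3 k)"
    using 1 2 3 by simp
  have "justified (occurs_before_beta a1 b1 a2 b2 a3 b3 i')
      (godel_beta a1 b1 i') (godel_beta a2 b2 i') (godel_beta a3 b3 i')" if "i' < length L" for i'
  proof -
    have "L ! i' = (godel_beta a1 b1 i', godel_beta a2 b2 i', godel_beta a3 b3 i')"
      using L_beta that by blast
    from valid_traceD[OF L(1) that this] show ?thesis
      using set_take_eq_occurs_before_beta[OF L_beta, of i'] that by simp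
  qed
  moreover have "godel_beta a1 b1 i = c" "godel_beta a2 b2 i = x" "godel_beta a3 b3 i = r"
    using L(2,3) L_beta by auto
  ultimately have "i < length L \<and> (\<forall>i'<length L. justified (occurs_before_beta a1 b1 a2 b2 a3 b3 i')
      (godel_beta a1 b1 i') (godel_beta a2 b2 i') (godel_beta a3 b3 i')) \<and>
    godel_beta a1 b1 i = c \<and> godel_beta a2 b2 i = x \<and> godel_beta a3 b3 i = r"
    using L(2) by blast
  then show ?thesis unfolding beta_derivable_def by blast
qed

lemma beta_derivable_imp_derivable:
  assumes "beta_derivable c x r"
  shows "derivable c x r"
proof -
  from assms obtain a1 b1 a2 b2 a3 b3 m i where coded: "i < m"
    "\<forall>i'<m. justified (occurs_before_beta a1 b1 a2 b2 a3 b3 i')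
      (godel_beta a1 b1 i') (godel_beta a2 b2 i') (godel_beta a3 b3 i')"
    "godel_beta a1 b1 i = c" "godel_beta a2 b2 i = x" "godel_beta a3 b3 i = r"
    unfolding beta_derivable_def by blast
  define L where
    "L = map (\<lambda>k. (godel_beta a1 b1 k, godel_beta a2 b2 k, godel_beta a3 b3 k)) [0..<m]"
  have len: "length L = m" unfolding L_def by simp
  have L_beta: "\<forall>k<length L. L ! k = (godel_beta a1 b1 k, godel_beta a2 b2 k, godel_beta a3 b3 k)"
    unfolding L_def by simp
  have "valid_trace L"
    unfolding valid_trace_def
  proof (intro allI impI)
    fix i' assume i': "i' < length L"
    then have "justified (\<lambda>c x r. (c, x, r) \<in> set (take i' L))
        (godel_beta a1 b1 i') (godel_beta a2 b2 i') (godel_beta a3 b3 i')"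
      using coded len set_take_eq_occurs_before_beta[OF L_beta, of i'] by simp
    with i' L_beta show
      "case L ! i' of (c, x, r) \<Rightarrow> justified (\<lambda>c x r. (c, x, r) \<in> set (take i' L)) c x r"
      by simp
  qed
  moreover have "L ! i = (c, x, r)" using coded len L_beta by simp
  then have "(c, x, r) \<in> set L" using coded len by (metis nth_mem)
  ultimately show ?thesis unfolding derivable_def by blast
qed

lemma derivable_iff_beta_derivable: "derivable c x r \<longleftrightarrow> beta_derivable c x r"
  using derivable_imp_beta_derivable beta_derivable_imp_derivable by blast

lemma self_halting_sigma1: "sigma1 1 (\<lambda>\<sigma>. self_halting (\<sigma> 0))"
proof -
  have "sigma1 1 (\<lambda>\<sigma>. \<exists>a1 b1 a2 b2 a3 b3 m i. i < m \<and>
     (\<forall>i'<m. \<exists>c x r. godel_beta a1 b1 i' = c \<and> godel_beta a2 b2 i' = x \<and> godel_beta a3 b3 i' = r \<and>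
        justified (occurs_before_beta a1 b1 a2 b2 a3 b3 i') c x r) \<and>
     godel_beta a1 b1 i = \<sigma> 0 \<and> (\<exists>z y. z = 0 \<and> y = ncons (\<sigma> 0) z \<and> godel_beta a2 b2 i = y))"
    by (((rule sigma1_ex, simp) | (rule sigma1_all_less, simp, simp) | rule sigma1_conj
      | rule sigma1_disj | (rule sigma1_intros; simp))+)
  thus ?thesis by (rule sigma1_cong) (auto simp: self_halting_def derivable_iff_beta_derivable
    beta_derivable_def)
qed


text \<open>In continuous logic the value \<open>0\<close> plays the role of true and \<open>1\<close> that of false.\<close>

definition truth :: "bool \<Rightarrow> real" where
  "truth P = (if P then 0 else 1)"

definition Conj :: "fm \<Rightarrow> fm \<Rightarrow> fm" where
  "Conj a b = Neg (Minus (Neg a) b)"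

definition Disj :: "fm \<Rightarrow> fm \<Rightarrow> fm" where
  "Disj a b = Minus a (Minus a b)"

lemma fval_Conj: "fval p \<sigma> (Conj a b) = min 1 (fval p \<sigma> a + fval p \<sigma> b)"
  unfolding Conj_def by simp

lemma fval_Conj_truth:
  "fval p \<sigma> a = truth P \<Longrightarrow> fval p \<sigma> b = truth Q \<Longrightarrow> fval p \<sigma> (Conj a b) = truth (P \<and> Q)"
  unfolding fval_Conj truth_def by auto

lemma fval_Disj_truth:
  "fval p \<sigma> a = truth P \<Longrightarrow> fval p \<sigma> b = truth Q \<Longrightarrow> fval p \<sigma> (Disj a b) = truth (P \<or> Q)"
  unfolding Disj_def truth_def by auto

lemma fval_Neg_truth: "fval p \<sigma> a = truth P \<Longrightarrow> fval p \<sigma> (Neg a) = truth (\<not> P)"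
  unfolding truth_def by auto

lemma Min_truth: "finite A \<Longrightarrow> A \<noteq> {} \<Longrightarrow> Min ((\<lambda>m. truth (P m)) ` A) = truth (\<exists>m\<in>A. P m)"
  by (cases "\<exists>m\<in>A. P m") (auto simp: truth_def intro!: Min_eqI)

lemma Max_truth: "finite A \<Longrightarrow> A \<noteq> {} \<Longrightarrow> Max ((\<lambda>m. truth (P m)) ` A) = truth (\<forall>m\<in>A. P m)"
  by (cases "\<forall>m\<in>A. P m") (auto simp: truth_def intro!: Max_eqI)

lemma fval_Inf_truth:
  assumes "0 < p" "\<And>m. m < p \<Longrightarrow> fval p (\<sigma>(x := m)) a = truth (P m)"
  shows "fval p \<sigma> (Inf x a) = truth (\<exists>m<p. P m)"
proof -
  have "(\<lambda>m. fval p (\<sigma>(x := m)) a) ` {0..<p} = (\<lambda>m. truth (P m)) ` {0..<p}"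
    using assms(2) by (intro image_cong) auto
  with assms(1) Min_truth[of "{..<p}" P] show ?thesis
    by (simp add: atLeast0LessThan lessThan_empty_iff Bex_def)
qed

lemma fval_Sup_truth:
  assumes "0 < p" "\<And>m. m < p \<Longrightarrow> fval p (\<sigma>(x := m)) a = truth (P m)"
  shows "fval p \<sigma> (Sup x a) = truth (\<forall>m<p. P m)"
proof -
  have "(\<lambda>m. fval p (\<sigma>(x := m)) a) ` {0..<p} = (\<lambda>m. truth (P m)) ` {0..<p}"
    using assms(2) by (intro image_cong) auto
  with assms(1) Max_truth[of "{..<p}" P] show ?thesis
    by (simp add: atLeast0LessThan lessThan_empty_iff Ball_def)
qed

lemma fval_in_unit_interval: "0 < p \<Longrightarrow> 0 \<le> fval p \<sigma> \<phi> \<and> fval p \<sigma> \<phi> \<le> 1"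
proof (induction \<phi> arbitrary: \<sigma>)
  case (Lam t)
  then show ?case by (simp add: Lambda_def)
next
  case (Sup x a)
  then show ?case by (auto simp: Max_le_iff Max_ge_iff intro: bexI[of _ 0])
next
  case (Inf x a)
  then show ?case by (auto simp: Min_le_iff Min_ge_iff intro: bexI[of _ 0])
next
  case (Half a)
  then have "0 \<le> fval p \<sigma> a \<and> fval p \<sigma> a \<le> 1" by blast
  then show ?case by simp
next
  case (Minus a b)
  then show ?case by (smt (verit) fval.simps(5))
qed (force simp: Lambda_def)+

lemma fval_Conj_truth_guarded:
  assumes "0 < p" "fval p \<sigma> a = truth P" "P \<Longrightarrow> fval p \<sigma> b = truth Q"
  shows "fval p \<sigma> (Conj a b) = truth (P \<and> Q)"
proof (cases P)
  case True
  then show ?thesis using assms fval_Conj_truth by blast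
next
  case False
  have "0 \<le> fval p \<sigma> b" using fval_in_unit_interval[OF assms(1)] by blast
  then show ?thesis using False assms(2) unfolding fval_Conj truth_def by simp
qed


section \<open>Detecting carries with \<open>\<Lambda>\<close>\<close>

lemma tval_lt: "0 < p \<Longrightarrow> tval p \<sigma> t < p"
  by (cases t) auto

lemma Lambda_add_carry:
  assumes "A < p" "B < p"
  shows "Lambda p A + Lambda p B - Lambda p ((A + B) mod p) = (if A + B < p then 0 else 1)"
proof (cases "A + B < p")
  case False
  then have "(A + B) mod p = A + B - p" using assms by (simp add: le_mod_geq)
  with False assms show ?thesis by (simp add: Lambda_def of_nat_diff field_simps)
qed (simp add: Lambda_def add_divide_distrib)

text \<open>\<open>d = \<Lambda>(s)/2 + \<Lambda>(t)/2 - \<Lambda>(s + t)/2\<close> is \<open>0\<close> if \<open>s + t\<close> does not wrap around \<open>p\<close>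
  and \<open>1/2\<close> if it does; \<open>Conj d d\<close> doubles it.\<close>

definition NoCarry :: "tm \<Rightarrow> tm \<Rightarrow> fm" where
  "NoCarry s t =
    (let d = Minus (Conj (Half (Lam s)) (Half (Lam t))) (Half (Lam (Add s t))) in Conj d d)"

lemma fval_NoCarry:
  assumes "0 < p"
  shows "fval p \<sigma> (NoCarry s t) = truth (tval p \<sigma> s + tval p \<sigma> t < p)"
proof -
  let ?A = "tval p \<sigma> s" and ?B = "tval p \<sigma> t"
  have AB: "?A < p" "?B < p" using tval_lt[OF assms] by auto
  then have "Lambda p ?A / 2 + Lambda p ?B / 2 < 1"
    by (simp add: Lambda_def field_simps)
  then have "fval p \<sigma> (Conj (Half (Lam s)) (Half (Lam t))) = Lambda p ?A / 2 + Lambda p ?B / 2"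
    by (simp add: fval_Conj)
  moreover have "Lambda p ?A / 2 + Lambda p ?B / 2 - Lambda p ((?A + ?B) mod p) / 2 =
      (if ?A + ?B < p then 0 else 1 / 2)"
    using Lambda_add_carry[OF AB] by (simp add: field_simps split: if_splits)
  ultimately show ?thesis
    unfolding NoCarry_def Let_def by (simp add: fval_Conj truth_def)
qed

lemma add_mod_no_carry_iff: "z < p \<Longrightarrow> ((x + y) mod p = z \<and> x + y < p) \<longleftrightarrow> x + y = (z::nat)"
  by auto

lemma double_mod_eq_self_iff: "u < p \<Longrightarrow> (u + u) mod p = u \<longleftrightarrow> u = (0::nat)"
  by (cases "u + u < p") (auto simp: le_mod_geq)

text \<open>\<open>PosDiff u t b\<close>: \<open>u + t = b\<close> without carry and \<open>u \<noteq> 0\<close>, the latter expressed as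
  \<open>u + u \<noteq> u\<close>.\<close>

definition PosDiff :: "nat \<Rightarrow> nat \<Rightarrow> nat \<Rightarrow> fm" where
  "PosDiff u t b = Conj (Conj (Eq (Add (V u) (V t)) (V b)) (NoCarry (V u) (V t)))
     (Neg (Eq (Add (V u) (V u)) (V u)))"

lemma fval_PosDiff:
  assumes "0 < p"
  shows "fval p \<sigma> (PosDiff u t b) = truth (\<sigma> u mod p + \<sigma> t mod p = \<sigma> b mod p \<and> \<sigma> u mod p \<noteq> 0)"
proof -
  have "fval p \<sigma> (PosDiff u t b) = truth ((((\<sigma> u mod p + \<sigma> t mod p) mod p = \<sigma> b mod p \<and>
      \<sigma> u mod p + \<sigma> t mod p < p) \<and> \<not> (\<sigma> u mod p + \<sigma> u mod p) mod p = \<sigma> u mod p))"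
    unfolding PosDiff_def
    by (intro fval_Conj_truth fval_Neg_truth) (auto simp: truth_def fval_NoCarry[OF assms])
  then show ?thesis
    using assms double_mod_eq_self_iff add_mod_no_carry_iff by simp
qed

definition Less :: "nat \<Rightarrow> nat \<Rightarrow> fm" where
  "Less x y = Inf (Suc (x + y)) (PosDiff (Suc (x + y)) x y)"

lemma fval_Less:
  assumes "0 < p"
  shows "fval p \<sigma> (Less x y) = truth (\<sigma> x mod p < \<sigma> y mod p)"
proof -
  have "fval p \<sigma> (Less x y) = truth (\<exists>u<p. u + \<sigma> x mod p = \<sigma> y mod p \<and> u \<noteq> 0)"
    unfolding Less_def by (rule fval_Inf_truth[OF assms]) (simp add: fval_PosDiff[OF assms])
  also have "(\<exists>u<p. u + \<sigma> x mod p = \<sigma> y mod p \<and> u \<noteq> 0) \<longleftrightarrow> \<sigma> x mod p < \<sigma> y mod p"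
    using mod_less_divisor[OF assms, of "\<sigma> y"]
    by (auto intro!: exI[of _ "\<sigma> y mod p - \<sigma> x mod p"])
  finally show ?thesis .
qed

text \<open>\<open>a * b\<close> does not wrap around iff \<open>a * t + a\<close> does not for any \<open>t < b\<close>.\<close>

definition NoCarryMult :: "nat \<Rightarrow> nat \<Rightarrow> fm" where
  "NoCarryMult a b = (let t = Suc (a + b) in
     Sup t (Disj (Neg (Less t b)) (NoCarry (Mul (V a) (V t)) (V a))))"

lemma fval_NoCarryMult:
  assumes "0 < p"
  shows "fval p \<sigma> (NoCarryMult a b) = truth (\<forall>t<\<sigma> b mod p. (\<sigma> a mod p * t) mod p + \<sigma> a mod p < p)"
proof -
  define t where "t = Suc (a + b)"
  have "fval p (\<sigma>(t := m)) (Disj (Neg (Less t b)) (NoCarry (Mul (V a) (V t)) (V a))) =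
      truth (\<not> m < \<sigma> b mod p \<or> (\<sigma> a mod p * m) mod p + \<sigma> a mod p < p)" if "m < p" for m
  proof (intro fval_Disj_truth fval_Neg_truth)
    have "t \<noteq> a" "t \<noteq> b" unfolding t_def by simp_all
    with that show "fval p (\<sigma>(t := m)) (Less t b) = truth (m < \<sigma> b mod p)"
      "fval p (\<sigma>(t := m)) (NoCarry (Mul (V a) (V t)) (V a)) =
        truth ((\<sigma> a mod p * m) mod p + \<sigma> a mod p < p)"
      by (simp_all add: fval_Less[OF assms] fval_NoCarry[OF assms])
  qed
  then have "fval p \<sigma> (NoCarryMult a b) =
      truth (\<forall>m<p. \<not> m < \<sigma> b mod p \<or> (\<sigma> a mod p * m) mod p + \<sigma> a mod p < p)"
    unfolding NoCarryMult_def Let_def t_def[symmetric] by (rule fval_Sup_truth[OF assms])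
  also have "(\<forall>m<p. \<not> m < \<sigma> b mod p \<or> (\<sigma> a mod p * m) mod p + \<sigma> a mod p < p) \<longleftrightarrow>
      (\<forall>m<\<sigma> b mod p. (\<sigma> a mod p * m) mod p + \<sigma> a mod p < p)"
    using mod_less_divisor[OF assms, of "\<sigma> b"] by (meson order.strict_trans not_less)
  finally show ?thesis .
qed

lemma mult_mod_no_carry_iff:
  assumes "a < p" "b < p" "c < (p::nat)"
  shows "((a * b) mod p = c \<and> (\<forall>t<b. (a * t) mod p + a < p)) \<longleftrightarrow> a * b = c"
proof
  assume h: "(a * b) mod p = c \<and> (\<forall>t<b. (a * t) mod p + a < p)"
  have "a * k < p" if "k \<le> b" for k
    using that
  proof (induction k)
    case (Suc k)
    then have "a * k < p" "k < b" by auto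
    with h have "(a * k) mod p + a < p" by blast
    with \<open>a * k < p\<close> show ?case by simp
  qed (use assms in simp)
  then show "a * b = c" using h by simp
next
  assume h: "a * b = c"
  have "(a * t) mod p + a < p" if "t < b" for t
  proof -
    have "a * t + a \<le> a * b" using that mult_le_mono2[of "Suc t" b a] by simp
    then show ?thesis using h assms(3) mod_less_eq_dividend[of "a * t" p] by linarith
  qed
  then show "(a * b) mod p = c \<and> (\<forall>t<b. (a * t) mod p + a < p)" using h assms(3) by simp
qed


section \<open>Translating Sigma-1 formulas to \<open>\<bbbF>\<^sub>p\<close>\<close>

text \<open>Every atom additionally asserts that its operation does not wrap around \<open>p\<close>, so the
  translation holds in \<open>\<bbbF>\<^sub>p\<close> iff the formula holds in \<open>{..<p}\<close> with the operations of \<open>\<nat>\<close>.\<close>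

primrec transl :: "arith_fm \<Rightarrow> fm" where
  "transl (AEq a b) = Eq (V a) (V b)"
| "transl (ANe a b) = Neg (Eq (V a) (V b))"
| "transl (AAdd a b c) = Conj (Eq (Add (V a) (V b)) (V c)) (NoCarry (V a) (V b))"
| "transl (AMul a b c) = Conj (Eq (Mul (V a) (V b)) (V c)) (NoCarryMult a b)"
| "transl (AAnd A B) = Conj (transl A) (transl B)"
| "transl (AOr A B) = Disj (transl A) (transl B)"
| "transl (AEx x A) = Inf x (transl A)"
| "transl (AAll x y A) = Sup x (Disj (Neg (Less x y)) (transl A))"

lemma fvars_NoCarry: "fvars (NoCarry s t) = tvars s \<union> tvars t"
  unfolding NoCarry_def Let_def Conj_def by auto

lemma fvars_Less: "fvars (Less x y) = {x, y}"
  unfolding Less_def PosDiff_def Conj_def by (auto simp: fvars_NoCarry)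

lemma fvars_transl: "fvars (transl A) \<subseteq> arith_vars A"
proof (induction A)
  case (AMul a b c)
  show ?case by (auto simp: Conj_def NoCarryMult_def Disj_def fvars_NoCarry fvars_Less)
next
  case (AAll x y A)
  then show ?case by (auto simp: Disj_def fvars_Less)
qed (auto simp: Conj_def Disj_def fvars_NoCarry)

lemma mod_fun_upd: "(m::nat) < p \<Longrightarrow> (\<lambda>z. (\<sigma>(x := m)) z mod p) = (\<lambda>z. \<sigma> z mod p)(x := m)"
  by (auto simp: fun_eq_iff)

lemma fval_transl:
  assumes "wf_arith A" "0 < p"
  shows "fval p \<sigma> (transl A) = truth (holds (\<lambda>x. x < p) (\<lambda>x. \<sigma> x mod p) A)"
  using assms(1)
proof (induction A arbitrary: \<sigma>)
  case (AAdd a b c)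
  have "fval p \<sigma> (transl (AAdd a b c)) = truth ((\<sigma> a mod p + \<sigma> b mod p) mod p = \<sigma> c mod p \<and>
      \<sigma> a mod p + \<sigma> b mod p < p)"
    by (simp, intro fval_Conj_truth) (auto simp: truth_def fval_NoCarry[OF assms(2)])
  then show ?case using add_mod_no_carry_iff assms(2) by simp
next
  case (AMul a b c)
  have "fval p \<sigma> (transl (AMul a b c)) = truth ((\<sigma> a mod p * (\<sigma> b mod p)) mod p = \<sigma> c mod p \<and>
      (\<forall>t<\<sigma> b mod p. (\<sigma> a mod p * t) mod p + \<sigma> a mod p < p))"
    by (simp only: transl.simps, intro fval_Conj_truth fval_NoCarryMult[OF assms(2)]) (simp add:
      truth_def)
  then show ?case using mult_mod_no_carry_iff assms(2) by simp
next
  case (AEx x A)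
  then have IH: "fval p \<sigma>' (transl A) = truth (holds (\<lambda>x. x < p) (\<lambda>x. \<sigma>' x mod p) A)" for \<sigma>'
    by simp
  have "fval p \<sigma> (transl (AEx x A)) = truth (\<exists>m<p. holds (\<lambda>x. x < p) ((\<lambda>z. \<sigma> z mod p)(x := m)) A)"
    unfolding transl.simps by (rule fval_Inf_truth[OF assms(2)]) (simp only: IH mod_fun_upd)
  then show ?case by simp
next
  case (AAll x y A)
  then have "x \<noteq> y"
    and IH: "fval p \<sigma>' (transl A) = truth (holds (\<lambda>x. x < p) (\<lambda>x. \<sigma>' x mod p) A)" for \<sigma>'
    by auto
  have "fval p (\<sigma>(x := m)) (Disj (Neg (Less x y)) (transl A)) =
      truth (\<not> m < \<sigma> y mod p \<or> holds (\<lambda>x. x < p) ((\<lambda>z. \<sigma> z mod p)(x := m)) A)" if "m < p" for m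
  proof (intro fval_Disj_truth fval_Neg_truth)
    show "fval p (\<sigma>(x := m)) (Less x y) = truth (m < \<sigma> y mod p)"
      using that \<open>x \<noteq> y\<close> by (simp add: fval_Less[OF assms(2)])
    show "fval p (\<sigma>(x := m)) (transl A) = truth (holds (\<lambda>x. x < p) ((\<lambda>z. \<sigma> z mod p)(x := m)) A)"
      using that by (simp only: IH mod_fun_upd)
  qed
  then have "fval p \<sigma> (transl (AAll x y A)) =
      truth (\<forall>m<p. \<not> m < \<sigma> y mod p \<or> holds (\<lambda>x. x < p) ((\<lambda>z. \<sigma> z mod p)(x := m)) A)"
    by (simp only: transl.simps) (rule fval_Sup_truth[OF assms(2)])
  then show ?case by (auto simp: truth_def)
qed (auto simp: truth_def fval_Conj_truth fval_Disj_truth)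

text \<open>In the formulas below variable 2 holds the element \<open>1\<close>, variable 1 is scratch, and
  \<open>IsNumeral n\<close> says that variable 0 holds \<open>n\<close>; it is built by recursion on \<open>n\<close>, so that its
  code is computable from \<open>n\<close>.\<close>

definition IsSucc :: "nat \<Rightarrow> nat \<Rightarrow> fm" where
  "IsSucc a b = Conj (Eq (Add (V a) (V 2)) (V b)) (NoCarry (V a) (V 2))"

primrec IsNumeral :: "nat \<Rightarrow> fm" where
  "IsNumeral 0 = Eq (Add (V 0) (V 0)) (V 0)"
| "IsNumeral (Suc k) = Inf 1 (Conj (IsSucc 1 0) (Inf 0 (Conj (Eq (V 0) (V 1)) (IsNumeral k))))"

lemma fval_IsNumeral: "0 < p \<Longrightarrow> \<sigma> 2 mod p = 1 \<Longrightarrow> fval p \<sigma> (IsNumeral k) = truth (\<sigma> 0 mod p = k)"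
proof (induction k arbitrary: \<sigma>)
  case 0
  thus ?case using double_mod_eq_self_iff[of "\<sigma> 0 mod p" p] by (simp add: truth_def)
next
  case (Suc k)
  have p: "0 < p" by fact
  have "fval p \<sigma> (IsNumeral (Suc k)) = truth (\<exists>m<p. m + 1 = \<sigma> 0 mod p \<and> (\<exists>m'<p. m' = m \<and> m' = k))"
    unfolding IsNumeral.simps
  proof (rule fval_Inf_truth[OF p])
    fix m assume m: "m < p"
    let ?s = "\<sigma>(1 := m)"
    have s1: "fval p ?s (IsSucc 1 0) = truth (m + 1 = \<sigma> 0 mod p)"
    proof -
      have "fval p ?s (IsSucc 1 0) = truth ((m + 1) mod p = \<sigma> 0 mod p \<and> m + 1 < p)"
        unfolding IsSucc_def using m Suc.prems(2)
        by (intro fval_Conj_truth) (simp_all add: truth_def fval_NoCarry[OF p])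
      thus ?thesis using add_mod_no_carry_iff[of "\<sigma> 0 mod p" p m 1] p by simp
    qed
    have s2: "fval p ?s (Inf 0 (Conj (Eq (V 0) (V 1)) (IsNumeral k))) = truth (\<exists>m'<p. m' = m
      \<and> m' = k)"
    proof (rule fval_Inf_truth[OF p])
      fix m' assume m': "m' < p"
      have "(?s(0 := m')) 2 mod p = 1" using Suc.prems(2) by simp
      hence "fval p (?s(0 := m')) (IsNumeral k) = truth (m' = k)" using Suc.IH[OF p] m' by simp
      thus "fval p (?s(0 := m')) (Conj (Eq (V 0) (V 1)) (IsNumeral k)) = truth (m' = m \<and> m' = k)"
        using m m' by (intro fval_Conj_truth) (simp_all add: truth_def)
    qed
    show "fval p ?s (Conj (IsSucc 1 0) (Inf 0 (Conj (Eq (V 0) (V 1)) (IsNumeral k)))) =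
        truth (m + 1 = \<sigma> 0 mod p \<and> (\<exists>m'<p. m' = m \<and> m' = k))"
      by (rule fval_Conj_truth[OF s1 s2])
  qed
  also have "(\<exists>m<p. m + 1 = \<sigma> 0 mod p \<and> (\<exists>m'<p. m' = m \<and> m' = k)) = (\<sigma> 0 mod p = Suc k)"
    using mod_less_divisor[OF p, of "\<sigma> 0"] by auto
  finally show ?case .
qed

definition IsOne :: fm where "IsOne = Sup 3 (Eq (Mul (V 3) (V 2)) (V 3))"

lemma fval_IsOne: "1 < p \<Longrightarrow> fval p \<sigma> IsOne = truth (\<sigma> 2 mod p = 1)"
proof -
  assume p1: "1 < p"
  hence p: "0 < p" by simp
  have "fval p \<sigma> IsOne = truth (\<forall>w<p. (w * (\<sigma> 2 mod p)) mod p = w)"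
    unfolding IsOne_def by (rule fval_Sup_truth[OF p]) (simp add: truth_def)
  also have "(\<forall>w<p. (w * (\<sigma> 2 mod p)) mod p = w) = (\<sigma> 2 mod p = 1)"
  proof
    assume "\<forall>w<p. (w * (\<sigma> 2 mod p)) mod p = w"
    hence "(1 * (\<sigma> 2 mod p)) mod p = 1" using p1 by blast
    thus "\<sigma> 2 mod p = 1" by simp
  qed simp
  finally show ?thesis .
qed

definition halting_sentence :: "nat \<Rightarrow> arith_fm \<Rightarrow> fm" where
  "halting_sentence n H = Inf 2 (Conj IsOne (Inf 0 (Conj (IsNumeral n) (transl H))))"

lemma fvars_IsNumeral: "fvars (IsNumeral k) \<subseteq> {0, 2}"
  by (induction k) (auto simp: IsSucc_def Conj_def fvars_NoCarry)

lemma sentence_halting_sentence: "arith_vars H \<subseteq> {0} \<Longrightarrow> sentence (halting_sentence n H)"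
  unfolding sentence_def halting_sentence_def Conj_def IsOne_def
    using fvars_IsNumeral[of n] fvars_transl[of H] by auto

lemma fval_halting_sentence:
  assumes p1: "1 < p" and H: "arith_vars H \<subseteq> {0}" "wf_arith H"
  shows "fval p \<sigma> (halting_sentence n H) = truth (n < p \<and> holds (\<lambda>x. x < p) (\<lambda>z. n) H)"
proof -
  have p: "0 < p" using p1 by simp
  have "fval p \<sigma> (halting_sentence n H) = truth (\<exists>v<p. v = 1 \<and> (\<exists>x<p. x = n
    \<and> holds (\<lambda>x. x < p) (\<lambda>z. n) H))"
    unfolding halting_sentence_def
  proof (rule fval_Inf_truth[OF p])
    fix v assume v: "v < p"
    show "fval p (\<sigma>(2 := v)) (Conj IsOne (Inf 0 (Conj (IsNumeral n) (transl H)))) =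
        truth (v = 1 \<and> (\<exists>x<p. x = n \<and> holds (\<lambda>x. x < p) (\<lambda>z. n) H))"
    proof (rule fval_Conj_truth_guarded[OF p])
      show "fval p (\<sigma>(2 := v)) IsOne = truth (v = 1)" using fval_IsOne[OF p1] v by simp
      assume v1: "v = 1"
      show "fval p (\<sigma>(2 := v)) (Inf 0 (Conj (IsNumeral n) (transl H))) = truth (\<exists>x<p. x = n
        \<and> holds (\<lambda>x. x < p) (\<lambda>z. n) H)"
      proof (rule fval_Inf_truth[OF p])
        fix x assume x: "x < p"
        let ?s = "\<sigma>(2 := v, 0 := x)"
        have t: "fval p ?s (IsNumeral n) = truth (x = n)"
          using fval_IsNumeral[OF p, of ?s n] v1 x p1 by simp
        have "fval p ?s (transl H) = truth (holds (\<lambda>x. x < p) (\<lambda>z. ?s z mod p) H)"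
          by (rule fval_transl[OF H(2) p])
        also have "holds (\<lambda>x. x < p) (\<lambda>z. ?s z mod p) H = holds (\<lambda>x. x < p) (\<lambda>z. x) H"
          using H(1) x by (intro holds_cong) auto
        finally have h: "fval p ?s (transl H) = truth (holds (\<lambda>x. x < p) (\<lambda>z. x) H)" .
        have "fval p ?s (Conj (IsNumeral n) (transl H)) = truth (x = n
          \<and> holds (\<lambda>x. x < p) (\<lambda>z. x) H)"
          by (rule fval_Conj_truth[OF t h])
        thus "fval p ?s (Conj (IsNumeral n) (transl H)) = truth (x = n
          \<and> holds (\<lambda>x. x < p) (\<lambda>z. n) H)"
          by (cases "x = n") (auto simp: truth_def)
      qed
    qed
  qed
  also have "(\<exists>v<p. v = 1 \<and> (\<exists>x<p. x = n \<and> holds (\<lambda>x. x < p) (\<lambda>z. n) H)) = (n < p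
    \<and> holds (\<lambda>x. x < p) (\<lambda>z. n) H)"
    using p1 by auto
  finally show ?thesis .
qed

lemma zero_in_Th_halting_sentence:
  assumes H: "arith_vars H \<subseteq> {0}" "wf_arith H" "holds (\<lambda>_. True) (\<lambda>_. n) H"
  shows "0 \<in> Th_Fp (halting_sentence n H)"
proof -
  have "eventually (\<lambda>p. holds (\<lambda>x. x < p) (\<lambda>_. n) H \<and> n < p) sequentially"
    using eventually_holds_bounded[OF H(3)] eventually_gt_at_top by (rule eventually_conj)
  then obtain B where B: "\<And>p. B \<le> p \<Longrightarrow> holds (\<lambda>x. x < p) (\<lambda>_. n) H \<and> n < p"
    unfolding eventually_sequentially by blast
  obtain p where p: "prime p" "B < p" using bigger_prime by blast
  then have "fval p (\<lambda>_. 0) (halting_sentence n H) = 0"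
    using B[of p] fval_halting_sentence[OF prime_gt_1_nat[OF p(1)] H(1,2)] by (simp add: truth_def)
  with p(1) show ?thesis
    unfolding Th_Fp_def by (intro closure_subset[THEN subsetD]) auto
qed

lemma Th_halting_sentence_subset:
  assumes H: "arith_vars H \<subseteq> {0}" "wf_arith H" "\<not> holds (\<lambda>_. True) (\<lambda>_. n) H"
  shows "Th_Fp (halting_sentence n H) \<subseteq> {1}"
proof -
  have "fval p (\<lambda>_. 0) (halting_sentence n H) = 1" if "prime p" for p
  proof -
    have "\<not> (n < p \<and> holds (\<lambda>x. x < p) (\<lambda>_. n) H)"
      using holds_bounded_imp_holds[of H "\<lambda>_. n" p] H(3) by auto
    then show ?thesis
      using fval_halting_sentence[OF prime_gt_1_nat[OF that] H(1,2)] by (simp add: truth_def)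
  qed
  then have "{fval p (\<lambda>_. 0) (halting_sentence n H) | p. prime p} \<subseteq> {1}" by auto
  then show ?thesis unfolding Th_Fp_def by (rule closure_minimal) simp
qed


section \<open>Recursive functions\<close>

definition recursive_fn :: "nat \<Rightarrow> (nat list \<Rightarrow> nat) \<Rightarrow> bool" where
  "recursive_fn n F \<longleftrightarrow> (\<exists>c. \<forall>xs. length xs = n \<longrightarrow> reval c xs (F xs))"

lemma recursive_fn_cong:
  "recursive_fn n F \<Longrightarrow> n = m \<Longrightarrow> (\<And>xs. length xs = m \<Longrightarrow> F xs = G xs) \<Longrightarrow> recursive_fn m G"
  unfolding recursive_fn_def by metis

primrec const_recf :: "nat \<Rightarrow> recf" where
  "const_recf 0 = Zr"
| "const_recf (Suc k) = Cn Sc [const_recf k]"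

lemma reval_const_recf: "reval (const_recf k) xs k"
proof (induction k)
  case 0 show ?case by (simp add: reval.zero)
next
  case (Suc k)
  show ?case by (simp, rule reval.comp[of "[k]"]) (use Suc in \<open>auto intro: reval.succ\<close>)
qed

lemma recursive_fn_const: "recursive_fn n (\<lambda>_. k)"
  unfolding recursive_fn_def using reval_const_recf by blast

lemma recursive_fn_proj: "i < n \<Longrightarrow> recursive_fn n (\<lambda>xs. xs ! i)"
  unfolding recursive_fn_def by (auto intro!: exI[of _ "Id i"] reval.proj)

lemma recursive_fn_Suc: "recursive_fn 1 (\<lambda>xs. Suc (xs ! 0))"
  unfolding recursive_fn_def
proof (intro exI[of _ Sc] allI impI)
  fix xs :: "nat list" assume "length xs = 1"
  then obtain x where "xs = [x]" by (metis One_nat_def length_0_conv length_Suc_conv)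
  thus "reval Sc xs (Suc (xs ! 0))" by (simp add: reval.succ)
qed

lemma recursive_fn_comp:
  assumes "recursive_fn (length Fs) G" "\<forall>F\<in>set Fs. recursive_fn n F"
  shows "recursive_fn n (\<lambda>xs. G (map (\<lambda>F. F xs) Fs))"
proof -
  obtain g where g: "\<forall>ys. length ys = length Fs \<longrightarrow> reval g ys (G ys)" using assms(1)
    unfolding recursive_fn_def by blast
  have "\<forall>F\<in>set Fs. \<exists>c. \<forall>xs. length xs = n \<longrightarrow> reval c xs (F xs)" using assms(2)
    unfolding recursive_fn_def by blast
  then obtain cf where cf: "\<forall>F\<in>set Fs. \<forall>xs. length xs = n \<longrightarrow> reval (cf F) xs (F xs)" by metis
  show ?thesis unfolding recursive_fn_def
  proof (intro exI[of _ "Cn g (map cf Fs)"] allI impI)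
    fix xs :: "nat list" assume xs: "length xs = n"
    show "reval (Cn g (map cf Fs)) xs (G (map (\<lambda>F. F xs) Fs))"
    proof (rule reval.comp[of "map (\<lambda>F. F xs) Fs"])
      show "length (map (\<lambda>F. F xs) Fs) = length (map cf Fs)" by simp
      show "\<forall>i<length (map cf Fs). reval (map cf Fs ! i) xs (map (\<lambda>F. F xs) Fs ! i)"
        using cf xs by simp
      show "reval g (map (\<lambda>F. F xs) Fs) (G (map (\<lambda>F. F xs) Fs))" using g by simp
    qed
  qed
qed

lemma recursive_fn_rec_nat:
  assumes "recursive_fn n F" "recursive_fn (Suc (Suc n)) G"
  shows "recursive_fn (Suc n) (\<lambda>xs. rec_nat (F (tl xs)) (\<lambda>k r. G (k # r # tl xs)) (hd xs))"
proof -
  obtain cf where cf: "\<forall>xs. length xs = n \<longrightarrow> reval cf xs (F xs)" using assms(1)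
    unfolding recursive_fn_def by blast
  obtain cg where cg: "\<forall>xs. length xs = Suc (Suc n) \<longrightarrow> reval cg xs (G xs)" using assms(2)
    unfolding recursive_fn_def by blast
  have main: "length xs = n \<Longrightarrow> reval (Pr cf cg) (k # xs) (rec_nat (F xs) (\<lambda>k r. G (k # r # xs)) k)"
    for k xs
  proof (induction k)
    case 0 thus ?case using cf by (simp add: reval.prim0)
  next
    case (Suc k)
    thus ?case using cg by (auto intro: reval.primS)
  qed
  show ?thesis unfolding recursive_fn_def
  proof (intro exI[of _ "Pr cf cg"] allI impI)
    fix xs :: "nat list" assume "length xs = Suc n"
    then obtain k ys where "xs = k # ys" "length ys = n" by (metis length_Suc_conv)
    thus "reval (Pr cf cg) xs (rec_nat (F (tl xs)) (\<lambda>k r. G (k # r # tl xs)) (hd xs))" using main by simp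
  qed
qed

lemma computable_iff_recursive_fn: "computable f \<longleftrightarrow> recursive_fn 1 (\<lambda>xs. f (xs ! 0))"
  unfolding computable_def recursive_fn_def
  by (metis length_Cons list.size(3) nth_Cons_0 One_nat_def length_0_conv length_Suc_conv)

definition computable2 :: "(nat \<Rightarrow> nat \<Rightarrow> nat) \<Rightarrow> bool" where
  "computable2 f \<longleftrightarrow> recursive_fn 2 (\<lambda>xs. f (xs ! 0) (xs ! 1))"

definition computable3 :: "(nat \<Rightarrow> nat \<Rightarrow> nat \<Rightarrow> nat) \<Rightarrow> bool" where
  "computable3 f \<longleftrightarrow> recursive_fn 3 (\<lambda>xs. f (xs ! 0) (xs ! 1) (xs ! 2))"

lemma computable_const: "computable (\<lambda>_. k)" unfolding computable_iff_recursive_fn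
  by (rule recursive_fn_const)
lemma computable2_const: "computable2 (\<lambda>_ _. k)" unfolding computable2_def
  by (rule recursive_fn_const)
lemma computable3_const: "computable3 (\<lambda>_ _ _. k)" unfolding computable3_def
  by (rule recursive_fn_const)
lemma computable_id: "computable (\<lambda>x. x)" unfolding computable_iff_recursive_fn
  by (rule recursive_fn_proj) simp
lemma computable_Suc: "computable Suc" unfolding computable_iff_recursive_fn
  by (rule recursive_fn_Suc)
lemma computable2_fst: "computable2 (\<lambda>x y. x)" unfolding computable2_def
  by (rule recursive_fn_proj) simp
lemma computable2_snd: "computable2 (\<lambda>x y. y)" unfolding computable2_def
  by (rule recursive_fn_proj) simp
lemma computable3_proj1: "computable3 (\<lambda>x y z. x)" unfolding computable3_def
  by (rule recursive_fn_proj) simp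
lemma computable3_proj2: "computable3 (\<lambda>x y z. y)" unfolding computable3_def
  by (rule recursive_fn_proj) simp
lemma computable3_proj3: "computable3 (\<lambda>x y z. z)" unfolding computable3_def
  by (rule recursive_fn_proj) simp

lemma recursive_fn_comp1: "recursive_fn 1 G \<Longrightarrow> recursive_fn n F \<Longrightarrow> recursive_fn n (\<lambda>xs. G [F xs])"
  using recursive_fn_comp[where G=G and Fs="[F]" and n=n] by simp
lemma recursive_fn_comp2:
  "recursive_fn 2 G \<Longrightarrow> recursive_fn n F1 \<Longrightarrow> recursive_fn n F2
    \<Longrightarrow> recursive_fn n (\<lambda>xs. G [F1 xs, F2 xs])"
  using recursive_fn_comp[where G=G and Fs="[F1, F2]" and n=n] by (simp add: numeral_2_eq_2)
lemma recursive_fn_comp3: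
  "recursive_fn 3 G \<Longrightarrow> recursive_fn n F1 \<Longrightarrow> recursive_fn n F2 \<Longrightarrow> recursive_fn n F3
    \<Longrightarrow> recursive_fn n (\<lambda>xs. G [F1 xs, F2 xs, F3 xs])"
  using recursive_fn_comp[where G=G and Fs="[F1, F2, F3]" and n=n] by (simp add: numeral_3_eq_3)

lemma computable_comp1: "computable g \<Longrightarrow> computable f \<Longrightarrow> computable (\<lambda>x. g (f x))"
  unfolding computable_iff_recursive_fn by (drule recursive_fn_comp1) auto
lemma computable_comp2:
  "computable2 g \<Longrightarrow> computable f1 \<Longrightarrow> computable f2 \<Longrightarrow> computable (\<lambda>x. g (f1 x) (f2 x))"
  unfolding computable_iff_recursive_fn computable2_def by (drule recursive_fn_comp2) auto
lemma computable_comp3: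
  "computable3 g \<Longrightarrow> computable f1 \<Longrightarrow> computable f2 \<Longrightarrow> computable f3
    \<Longrightarrow> computable (\<lambda>x. g (f1 x) (f2 x) (f3 x))"
  unfolding computable_iff_recursive_fn computable3_def by (drule recursive_fn_comp3) auto
lemma computable2_comp1: "computable g \<Longrightarrow> computable2 f \<Longrightarrow> computable2 (\<lambda>x y. g (f x y))"
  unfolding computable_iff_recursive_fn computable2_def by (drule recursive_fn_comp1) auto
lemma computable2_comp2:
  "computable2 g \<Longrightarrow> computable2 f1 \<Longrightarrow> computable2 f2 \<Longrightarrow> computable2 (\<lambda>x y. g (f1 x y) (f2 x y))"
  unfolding computable2_def by (drule recursive_fn_comp2) auto
lemma computable2_comp3:
  "computable3 g \<Longrightarrow> computable2 f1 \<Longrightarrow> computable2 f2 \<Longrightarrow> computable2 f3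
    \<Longrightarrow> computable2 (\<lambda>x y. g (f1 x y) (f2 x y) (f3 x y))"
  unfolding computable2_def computable3_def by (drule recursive_fn_comp3) auto
lemma computable3_comp1: "computable g \<Longrightarrow> computable3 f \<Longrightarrow> computable3 (\<lambda>x y z. g (f x y z))"
  unfolding computable_iff_recursive_fn computable3_def by (drule recursive_fn_comp1) auto
lemma computable3_comp2:
  "computable2 g \<Longrightarrow> computable3 f1 \<Longrightarrow> computable3 f2 \<Longrightarrow> computable3 (\<lambda>x y z. g (f1 x y z) (f2 x y z))"
  unfolding computable2_def computable3_def by (drule recursive_fn_comp2) auto
lemma computable3_comp3:
  "computable3 g \<Longrightarrow> computable3 f1 \<Longrightarrow> computable3 f2 \<Longrightarrow> computable3 f3
    \<Longrightarrow> computable3 (\<lambda>x y z. g (f1 x y z) (f2 x y z) (f3 x y z))"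
  unfolding computable3_def by (drule recursive_fn_comp3) auto

lemma computable_rec_nat: "computable2 g \<Longrightarrow> computable (\<lambda>n. rec_nat a (\<lambda>k r. g k r) n)"
proof -
  assume "computable2 g"
  hence "recursive_fn (Suc (Suc 0)) (\<lambda>xs. g (xs ! 0) (xs ! 1))" unfolding computable2_def
    by (simp add: numeral_2_eq_2)
  from recursive_fn_rec_nat[OF recursive_fn_const[of 0 a] this] show ?thesis
    unfolding computable_iff_recursive_fn
    by (rule recursive_fn_cong) (auto simp: length_Suc_conv)
qed

lemma computable2_rec_nat:
  "computable a \<Longrightarrow> computable3 g \<Longrightarrow> computable2 (\<lambda>n y. rec_nat (a y) (\<lambda>k r. g k r y) n)"
proof -
  assume "computable a" "computable3 g"
  hence "recursive_fn 1 (\<lambda>xs. a (xs ! 0))"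
    "recursive_fn (Suc (Suc 1)) (\<lambda>xs. g (xs ! 0) (xs ! 1) (xs ! 2))"
    unfolding computable_iff_recursive_fn computable3_def by (simp_all add: numeral_3_eq_3)
  from recursive_fn_rec_nat[OF this] show ?thesis unfolding computable2_def
    by (rule recursive_fn_cong) (auto simp: length_Suc_conv numeral_2_eq_2)
qed

lemma computable3_if_zero: "computable3 (\<lambda>c a b. if c = 0 then b else a)"
proof -
  have "recursive_fn 2 (\<lambda>xs. xs ! 1)" by (rule recursive_fn_proj) simp
  moreover have "recursive_fn (Suc (Suc 2)) (\<lambda>xs. xs ! 2)" by (rule recursive_fn_proj) simp
  ultimately have
    "recursive_fn (Suc 2) (\<lambda>xs. rec_nat (tl xs ! 1) (\<lambda>k r. (k # r # tl xs) ! 2) (hd xs))"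
    by (rule recursive_fn_rec_nat)
  thus ?thesis unfolding computable3_def
    by (rule recursive_fn_cong) (auto simp: length_Suc_conv numeral_3_eq_3 numeral_2_eq_2
      gr0_conv_Suc)
qed


lemma computable_cong: "computable f \<Longrightarrow> (\<And>x. f x = g x) \<Longrightarrow> computable g"
  by (metis ext)

lemma computable2_cong: "computable2 f \<Longrightarrow> (\<And>x y. f x y = g x y) \<Longrightarrow> computable2 g"
  by (metis ext)


lemma computable2_plus: "computable2 (\<lambda>x y. x + y)"
proof (rule computable2_cong[OF computable2_rec_nat[OF computable_id computable3_comp1[OF
  computable_Suc computable3_proj2]]])
  fix x y show "rec_nat y (\<lambda>k r. Suc r) x = x + y" by (induction x) auto
qed

lemma computable_pred: "computable (\<lambda>x. x - 1)"
proof (rule computable_cong[OF computable_rec_nat[OF computable2_fst]])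
  fix x show "rec_nat 0 (\<lambda>k r. k) x = x - 1" by (cases x) auto
qed

lemma computable2_minus: "computable2 (\<lambda>x y. x - y)"
proof -
  have "computable2 (\<lambda>n y. rec_nat y (\<lambda>k r. r - 1) n)"
    by (rule computable2_rec_nat[OF computable_id computable3_comp1[OF computable_pred
      computable3_proj2]])
  moreover have "rec_nat y (\<lambda>k r. r - 1) n = y - n" for n y by (induction n) auto
  ultimately have "computable2 (\<lambda>n y. y - n)" by simp
  from computable2_comp2[OF this computable2_snd computable2_fst] show ?thesis by simp
qed

lemma computable_triangle: "computable triangle"
proof -
  have "computable2 (\<lambda>k r. r + Suc k)"
    by (rule computable2_comp2[OF computable2_plus computable2_snd computable2_comp1[OF
      computable_Suc computable2_fst]])
  from computable_rec_nat[OF this, of 0] show ?thesis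
  proof (rule computable_cong)
    fix x show "rec_nat 0 (\<lambda>k r. r + Suc k) x = triangle x" by (induction x) auto
  qed
qed

lemma computable2_prod_encode: "computable2 (\<lambda>a b. prod_encode (a, b))"
  using computable2_comp2[OF computable2_plus computable2_comp1[OF computable_triangle
    computable2_plus] computable2_fst] by (simp add: prod_encode_def)

definition le_ind :: "nat \<Rightarrow> nat \<Rightarrow> nat" where "le_ind x y = (if x \<le> y then 1 else 0)"

lemma computable2_le_ind: "computable2 le_ind"
proof (rule computable2_cong[OF computable2_comp2[OF computable2_minus computable2_const
  computable2_minus]])
  fix x y show "1 - (x - y) = le_ind x y" unfolding le_ind_def by auto
qed

definition tri_root :: "nat \<Rightarrow> nat" where
  "tri_root m = rec_nat 0 (\<lambda>k r. if le_ind (triangle (Suc r)) (Suc k) = 0 then r else Suc r) m"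

lemma computable_tri_root: "computable tri_root"
proof -
  have "computable2 (\<lambda>k r. if le_ind (triangle (Suc r)) (Suc k) = 0 then r else Suc r)"
    by (rule computable2_comp3[OF computable3_if_zero computable2_comp2[OF computable2_le_ind
      computable2_comp1[OF computable_triangle computable2_comp1[OF computable_Suc computable2_snd]]
        computable2_comp1[OF computable_Suc computable2_fst]]
          computable2_comp1[OF computable_Suc computable2_snd] computable2_snd])
  from computable_rec_nat[OF this, of 0] show ?thesis unfolding tri_root_def .
qed

lemma tri_root_bounds: "triangle (tri_root m) \<le> m \<and> m < triangle (Suc (tri_root m))"
proof (induction m)
  case 0 show ?case by (simp add: tri_root_def)
next
  case (Suc m)
  have e: "tri_root (Suc m)
    = (if triangle (Suc (tri_root m)) \<le> Suc m then Suc (tri_root m) else tri_root m)"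
    by (simp add: tri_root_def le_ind_def)
  show ?case using Suc by (auto simp: e)
qed

lemma prod_decode_tri_root:
  "prod_decode m = (m - triangle (tri_root m), tri_root m - (m - triangle (tri_root m)))"
proof -
  let ?s = "tri_root m" let ?a = "m - triangle ?s"
  have "?a \<le> ?s" using tri_root_bounds[of m] by (simp add: less_Suc_eq_le) linarith
  hence "prod_encode (?a, ?s - ?a) = m" unfolding prod_encode_def using tri_root_bounds[of m] by simp
  thus ?thesis by (metis prod_encode_inverse)
qed

lemma computable_fst_prod_decode: "computable (\<lambda>m. fst (prod_decode m))"
  using computable_comp2[OF computable2_minus computable_id computable_comp1[OF computable_triangle
    computable_tri_root]] by (simp add: prod_decode_tri_root)
lemma computable_snd_prod_decode: "computable (\<lambda>m. snd (prod_decode m))"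
  using computable_comp2[OF computable2_minus computable_tri_root computable_comp2[OF
    computable2_minus computable_id computable_comp1[OF computable_triangle computable_tri_root]]]
      by (simp add: prod_decode_tri_root)

definition code_hd :: "nat \<Rightarrow> nat" where "code_hd l = fst (prod_decode (l - 1))"
definition code_tl :: "nat \<Rightarrow> nat" where "code_tl l = snd (prod_decode (l - 1))"

lemma computable_code_hd: "computable code_hd" unfolding code_hd_def
  by (rule computable_comp1[OF computable_fst_prod_decode computable_pred])
lemma computable_code_tl: "computable code_tl" unfolding code_tl_def
  by (rule computable_comp1[OF computable_snd_prod_decode computable_pred])

definition code_drop :: "nat \<Rightarrow> nat \<Rightarrow> nat" where "code_drop k l = rec_nat l (\<lambda>k' r. code_tl r) k"
lemma computable2_code_drop: "computable2 code_drop" unfolding code_drop_def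
  by (rule computable2_rec_nat[OF computable_id computable3_comp1[OF computable_code_tl
    computable3_proj2]])

definition hd_below_half :: "nat \<Rightarrow> nat" where
  "hd_below_half l = (if l
    = 0 then 0 else le_ind (fst (prod_decode (code_hd l)) + fst (prod_decode (code_hd l))) (snd
      (prod_decode (code_hd l))))"
lemma computable_hd_below_half: "computable hd_below_half"
  unfolding hd_below_half_def
  by (rule computable_comp3[OF computable3_if_zero computable_id computable_comp2[OF
    computable2_le_ind computable_comp2[OF computable2_plus computable_comp1[OF
      computable_fst_prod_decode computable_code_hd] computable_comp1[OF computable_fst_prod_decode
        computable_code_hd]]
         computable_comp1[OF computable_snd_prod_decode computable_code_hd]] computable_const])

definition below_half_upto :: "nat \<Rightarrow> nat \<Rightarrow> nat" where
  "below_half_upto k l = rec_nat 0 (\<lambda>k' r. if r = 0 then hd_below_half (code_drop k' l) else 1) k"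
lemma computable2_below_half_upto: "computable2 below_half_upto"
  unfolding below_half_upto_def
  by (rule computable2_rec_nat[OF computable_const computable3_comp3[OF computable3_if_zero
    computable3_proj2 computable3_const computable3_comp1[OF computable_hd_below_half
      computable3_comp2[OF computable2_code_drop computable3_proj1 computable3_proj3]]]])

definition has_below_half :: "nat \<Rightarrow> nat" where "has_below_half l = below_half_upto l l"
lemma computable_has_below_half: "computable has_below_half" unfolding has_below_half_def
  by (rule computable_comp2[OF computable2_below_half_upto computable_id computable_id])

definition below_half :: "nat \<Rightarrow> bool" where
  "below_half c \<longleftrightarrow> 2 * fst (prod_decode c) \<le> snd (prod_decode c)"

lemma list_decode_pos: "l \<noteq> 0 \<Longrightarrow> list_decode l = code_hd l # list_decode (code_tl l)"
  unfolding code_hd_def code_tl_def by (cases l) (auto split: prod.split)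

lemma list_decode_zero_iff: "list_decode l = [] \<longleftrightarrow> l = 0"
  using list_decode_pos[of l] by (cases "l = 0") auto

lemma list_decode_code_drop: "list_decode (code_drop k l) = drop k (list_decode l)"
proof (induction k)
  case 0 show ?case by (simp add: code_drop_def)
next
  case (Suc k)
  have e: "code_drop (Suc k) l = code_tl (code_drop k l)" by (simp add: code_drop_def)
  show ?case
  proof (cases "code_drop k l = 0")
    case True
    hence "drop k (list_decode l) = []" using Suc by simp
    moreover have "code_tl 0 = 0" unfolding code_tl_def
      by (simp add: prod_decode_def prod_decode_aux.simps)
    ultimately show ?thesis using True e by (simp add: drop_Suc tl_drop[symmetric])
  next
    case False
    hence "list_decode (code_drop k l)
      = code_hd (code_drop k l) # list_decode (code_tl (code_drop k l))" by (rule list_decode_pos)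
    hence "list_decode (code_tl (code_drop k l)) = tl (drop k (list_decode l))" using Suc by simp
    moreover have "drop (Suc k) (list_decode l) = tl (drop k (list_decode l))"
      by (simp add: drop_Suc tl_drop)
    ultimately show ?thesis using e by simp
  qed
qed

lemma hd_below_half_iff:
  "hd_below_half l = (if l \<noteq> 0 \<and> below_half (hd (list_decode l)) then 1 else 0)"
proof (cases "l = 0")
  case True thus ?thesis by (simp add: hd_below_half_def)
next
  case False
  thus ?thesis unfolding hd_below_half_def below_half_def le_ind_def using list_decode_pos[OF False] by auto
qed

lemma below_half_upto_iff:
  "below_half_upto k l = (if \<exists>j<k. j < length (list_decode l)
    \<and> below_half (list_decode l ! j) then 1 else 0)"
proof (induction k)
  case 0 show ?case by (simp add: below_half_upto_def)
next
  case (Suc k)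
  have e: "below_half_upto (Suc k) l = (if below_half_upto k l
    = 0 then hd_below_half (code_drop k l) else 1)" by (simp add: below_half_upto_def)
  have g: "hd_below_half (code_drop k l) = (if k < length (list_decode l)
    \<and> below_half (list_decode l ! k) then 1 else 0)"
  proof -
    have "code_drop k l \<noteq> 0 \<longleftrightarrow> k < length (list_decode l)"
      using list_decode_code_drop[of k l] list_decode_zero_iff[of "code_drop k l"] by auto
    moreover have
      "k < length (list_decode l) \<Longrightarrow> hd (list_decode (code_drop k l)) = list_decode l ! k"
      using list_decode_code_drop[of k l] by (simp add: hd_drop_conv_nth)
    ultimately show ?thesis unfolding hd_below_half_iff by auto
  qed
  show ?case unfolding e g Suc by (auto simp: less_Suc_eq)
qed

lemma length_list_decode_le: "length (list_decode n) \<le> n"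
proof (induction n rule: less_induct)
  case (less n)
  show ?case
  proof (cases n)
    case 0 thus ?thesis by simp
  next
    case (Suc m)
    obtain x y where xy: "prod_decode m = (x, y)" by (cases "prod_decode m")
    have "prod_encode (x, y) = m" using xy by (metis prod_decode_inverse)
    hence "y \<le> m" using le_prod_encode_2[of y x] by simp
    hence "length (list_decode y) \<le> y" using less Suc by simp
    thus ?thesis using Suc xy \<open>y \<le> m\<close> by simp
  qed
qed

lemma has_below_half_iff:
  "has_below_half l = (if \<exists>c\<in>set (list_decode l). below_half c then 1 else 0)"
proof -
  have "(\<exists>j<l. j < length (list_decode l)
    \<and> below_half (list_decode l ! j)) = (\<exists>c\<in>set (list_decode l). below_half c)"
  proof
    assume "\<exists>j<l. j < length (list_decode l) \<and> below_half (list_decode l ! j)"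
    thus "\<exists>c\<in>set (list_decode l). below_half c" using nth_mem by blast
  next
    assume "\<exists>c\<in>set (list_decode l). below_half c"
    then obtain j where j: "j < length (list_decode l)" "below_half (list_decode l ! j)"
      by (auto simp: in_set_conv_nth)
    moreover have "j < l" using j(1) length_list_decode_le[of l] by linarith
    ultimately show "\<exists>j<l. j < length (list_decode l) \<and> below_half (list_decode l ! j)" by blast
  qed
  thus ?thesis unfolding has_below_half_def below_half_upto_iff by simp
qed


definition rat_of_code :: "nat \<Rightarrow> real" where
  "rat_of_code c = real (fst (prod_decode c)) / real (Suc (snd (prod_decode c)))"

lemma out_set_eq: "out_set l = rat_of_code ` set (list_decode l)"
  unfolding out_set_def rat_of_code_def by (auto simp: split_beta)

lemma below_half_iff: "below_half c \<longleftrightarrow> rat_of_code c < 1 / 2"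
proof -
  obtain a b where ab: "prod_decode c = (a, b)" by (cases "prod_decode c")
  have "real a / real (Suc b) < 1 / 2 \<longleftrightarrow> 2 * real a < real (Suc b)" by (simp add: field_simps)
  also have "\<dots> \<longleftrightarrow> 2 * a \<le> b" by linarith
  finally show ?thesis unfolding below_half_def rat_of_code_def ab by simp
qed

lemma has_below_half_out_set: "has_below_half l = (if \<exists>s\<in>out_set l. s < 1 / 2 then 1 else 0)"
proof -
  have "(\<exists>s\<in>out_set l. s < 1 / 2) \<longleftrightarrow> (\<exists>c\<in>set (list_decode l). below_half c)"
    unfolding out_set_eq below_half_iff by blast
  then show ?thesis by (simp only: has_below_half_iff)
qed

lemma has_below_half_if_approx_zero:
  assumes "0 \<in> T" "\<forall>v\<in>T. \<exists>s\<in>out_set l. dist v s \<le> \<epsilon>" "\<epsilon> < 1 / 2"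
  shows "has_below_half l = 1"
proof -
  obtain s where s: "s \<in> out_set l" "dist 0 s \<le> \<epsilon>" using assms by blast
  then have "s < 1 / 2" using assms(3) unfolding dist_real_def by linarith
  with s(1) show ?thesis unfolding has_below_half_out_set by auto
qed

lemma has_below_half_if_approx_one:
  assumes "T \<subseteq> {1}" "\<forall>s\<in>out_set l. \<exists>v\<in>T. dist s v \<le> \<epsilon>" "\<epsilon> < 1 / 2"
  shows "has_below_half l = 0"
proof -
  have "\<not> s < 1 / 2" if "s \<in> out_set l" for s
  proof -
    from assms(2) that obtain v where "v \<in> T" "dist s v \<le> \<epsilon>" by blast
    with assms(1,3) show ?thesis by (auto simp: dist_real_def)
  qed
  then have "\<not> (\<exists>s\<in>out_set l. s < 1 / 2)" by blast
  then show ?thesis by (simp only: has_below_half_out_set if_False)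
qed


definition enc_Conj :: "nat \<Rightarrow> nat \<Rightarrow> nat" where
  "enc_Conj u v = prod_encode (2, prod_encode (4, prod_encode (prod_encode (2, u), v)))"

lemma enc_fm_Conj: "enc_fm (Conj a b) = enc_Conj (enc_fm a) (enc_fm b)"
  by (simp add: Conj_def enc_Conj_def)

lemma computable2_enc_Conj: "computable2 enc_Conj"
proof -
  have a: "computable2 (\<lambda>u v. prod_encode (prod_encode (2, u), v))"
    by (rule computable2_comp2[OF computable2_prod_encode computable2_comp2[OF
      computable2_prod_encode computable2_const computable2_fst] computable2_snd])
  have b: "computable2 (\<lambda>u v. prod_encode (4, prod_encode (prod_encode (2, u), v)))"
    by (rule computable2_comp2[OF computable2_prod_encode computable2_const a])
  show ?thesis unfolding enc_Conj_def
    by (rule computable2_comp2[OF computable2_prod_encode computable2_const b])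
qed

lemma computable_prod_encode_const: "computable g \<Longrightarrow> computable (\<lambda>x. prod_encode (k, g x))"
  by (rule computable_comp2[OF computable2_prod_encode computable_const])
lemma computable_enc_Conj_const_left: "computable g \<Longrightarrow> computable (\<lambda>x. enc_Conj k (g x))"
  by (rule computable_comp2[OF computable2_enc_Conj computable_const])
lemma computable_enc_Conj_const_right: "computable g \<Longrightarrow> computable (\<lambda>x. enc_Conj (g x) k)"
  by (rule computable_comp2[OF computable2_enc_Conj _ computable_const])

definition enc_IsNumeral_step :: "nat \<Rightarrow> nat" where
  "enc_IsNumeral_step r = prod_encode (6, prod_encode (1, enc_Conj (enc_fm (IsSucc 1 0))
     (prod_encode (6, prod_encode (0, enc_Conj (enc_fm (Eq (V 0) (V 1))) r)))))"

lemma computable_enc_IsNumeral_step: "computable enc_IsNumeral_step"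
  unfolding enc_IsNumeral_step_def
  by (intro computable_prod_encode_const computable_enc_Conj_const_left computable_id)

lemma enc_fm_IsNumeral:
  "enc_fm (IsNumeral n) = rec_nat (enc_fm (IsNumeral 0)) (\<lambda>k r. enc_IsNumeral_step r) n"
  by (induction n) (simp_all add: enc_IsNumeral_step_def enc_fm_Conj)

lemma computable_enc_IsNumeral: "computable (\<lambda>n. enc_fm (IsNumeral n))"
  by (rule computable_cong[OF computable_rec_nat[OF computable2_comp1[OF
    computable_enc_IsNumeral_step computable2_snd]]]) (rule enc_fm_IsNumeral[symmetric])

lemma enc_fm_halting_sentence:
  "enc_fm (halting_sentence n H) = prod_encode (6, prod_encode (2, enc_Conj (enc_fm IsOne)
     (prod_encode (6, prod_encode (0, enc_Conj (enc_fm (IsNumeral n)) (enc_fm (transl H)))))))"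
  by (simp add: halting_sentence_def enc_fm_Conj)

lemma computable_halting_query: "computable (\<lambda>n. prod_encode (enc_fm (halting_sentence n H), 2))"
proof -
  have "computable (\<lambda>n. enc_fm (halting_sentence n H))"
    unfolding enc_fm_halting_sentence
      by (intro computable_prod_encode_const computable_enc_Conj_const_left
        computable_enc_Conj_const_right computable_enc_IsNumeral)
  thus ?thesis by (rule computable_comp2[OF computable2_prod_encode _ computable_const])
qed


inductive_cases reval_ZrE: "reval Zr xs r"
inductive_cases reval_ScE: "reval Sc xs r"
inductive_cases reval_IdE: "reval (Id i) xs r"
inductive_cases reval_CnE: "reval (Cn g fs) xs r"
inductive_cases reval_PrE: "reval (Pr f g) xs r"
inductive_cases reval_MnE: "reval (Mn f) xs r"

lemma reval_deterministic: "reval c xs r \<Longrightarrow> reval c xs r' \<Longrightarrow> r = r'"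
proof (induction arbitrary: r' rule: reval.induct)
  case (comp ys fs xs g r)
  from comp.prems obtain ys' where ys': "length ys' = length fs"
    "\<forall>i<length fs. reval (fs ! i) xs (ys' ! i)" "reval g ys' r'"
    by (rule reval_CnE) blast
  have "\<forall>i<length fs. ys ! i = ys' ! i" using ys'(2) comp.IH(1) by blast
  then have "ys' = ys" using ys'(1) comp.hyps(1) by (simp add: nth_equalityI)
  with comp.IH(2) ys'(3) show ?case by simp
next
  case (prim0 f xs r g)
  from prim0.prems show ?case by (rule reval_PrE) (auto dest: prim0.IH)
next
  case (primS f g k xs r1 r)
  from primS.prems show ?case by (rule reval_PrE) (auto dest: primS.IH(1) primS.IH(2))
next
  case (mu f k xs)
  from mu.prems obtain k' where k': "reval f (k' # xs) 0" "\<forall>j<k'. \<exists>r. reval f (j # xs) r \<and> 0 < r"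
    "r' = k'"
    by (rule reval_MnE) blast
  from mu.IH(2) k'(1) have "\<not> k' < k" by force
  moreover from mu.IH(1) k'(2) have "\<not> k < k'" by force
  ultimately show ?case using k'(3) by simp
qed (auto elim: reval_ZrE reval_ScE reval_IdE)

text \<open>On the argument list \<open>[y]\<close> the program \<open>Mn (Id 1)\<close> searches for a \<open>k\<close> with \<open>y = 0\<close>,
  so it halts iff \<open>y = 0\<close>.\<close>

lemma reval_diagonal:
  assumes hc: "\<forall>n. reval hc [n] (h n)"
  shows "(\<exists>r. reval (Cn (Mn (Id 1)) [hc]) [n] r) \<longleftrightarrow> h n = 0"
proof
  assume "\<exists>r. reval (Cn (Mn (Id 1)) [hc]) [n] r"
  then obtain r where "reval (Cn (Mn (Id 1)) [hc]) [n] r" by blast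
  then obtain ys where ys: "length ys = 1" "reval hc [n] (ys ! 0)" "reval (Mn (Id 1)) ys r"
    by (rule reval_CnE) auto
  have "ys ! 0 = h n" using reval_deterministic[OF ys(2)] hc by blast
  hence "ys = [h n]" using ys(1) by (metis One_nat_def length_0_conv length_Suc_conv nth_Cons_0)
  with ys(3) have "reval (Mn (Id 1)) [h n] r" by simp
  then obtain k where "reval (Id 1) (k # [h n]) 0" by (rule reval_MnE) blast
  thus "h n = 0" by (rule reval_IdE) simp
next
  assume h0: "h n = 0"
  have "reval (Mn (Id 1)) [0] 0"
    by (rule reval.mu) (auto intro: reval.proj[of 1 "[0, 0]", simplified])
  moreover have "reval hc [n] 0" using hc h0 by metis
  ultimately have "reval (Cn (Mn (Id 1)) [hc]) [n] 0"
    by (intro reval.comp[of "[0]"]) auto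
  thus "\<exists>r. reval (Cn (Mn (Id 1)) [hc]) [n] r" by blast
qed

lemma self_halting_not_computable: "\<not> computable (\<lambda>n. if self_halting n then 1 else 0)"
proof
  assume "computable (\<lambda>n. if self_halting n then 1 else 0)"
  then obtain hc where hc: "\<forall>n. reval hc [n] (if self_halting n then 1 else 0)"
    unfolding computable_def by blast
  let ?d = "Cn (Mn (Id 1)) [hc]"
  have "self_halting (recf_code ?d) \<longleftrightarrow> (if self_halting (recf_code ?d) then 1 else 0) = (0::nat)"
    using self_halting_recf_code reval_diagonal[OF hc] by blast
  then show False by (cases "self_halting (recf_code ?d)") auto
qed

lemma decidable_Th_Fp_imp_computable_self_halting:
  assumes "decidable_th Th_Fp"
  shows "computable (\<lambda>n. if self_halting n then 1 else 0)"
proof -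
  obtain f where f: "computable f" "\<forall>\<psi> k. sentence \<psi> \<longrightarrow>
      (let S = out_set (f (prod_encode (enc_fm \<psi>, k))); \<epsilon> = 1 / real (Suc k) in
        S \<subseteq> {0..1} \<and> (\<forall>v\<in>Th_Fp \<psi>. \<exists>s\<in>S. dist v s \<le> \<epsilon>) \<and> (\<forall>s\<in>S. \<exists>v\<in>Th_Fp \<psi>. dist s v \<le> \<epsilon>))"
    using assms unfolding decidable_th_def by blast
  obtain H where H: "wf_arith H" "arith_vars H \<subseteq> {0}"
    "\<And>\<sigma>. holds (\<lambda>_. True) \<sigma> H = self_halting (\<sigma> 0)"
    using self_halting_sigma1 unfolding sigma1_def by fastforce
  define query where "query n = f (prod_encode (enc_fm (halting_sentence n H), 2))" for n
  have "has_below_half (query n) = (if self_halting n then 1 else 0)" for n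
  proof -
    let ?T = "Th_Fp (halting_sentence n H)" and ?\<epsilon> = "1 / real (Suc 2)"
    have approx: "\<forall>v\<in>?T. \<exists>s\<in>out_set (query n). dist v s \<le> ?\<epsilon>"
      "\<forall>s\<in>out_set (query n). \<exists>v\<in>?T. dist s v \<le> ?\<epsilon>"
      using f(2)[rule_format, OF sentence_halting_sentence[OF H(2)], of n 2]
      unfolding query_def Let_def by blast+
    have "?\<epsilon> < 1 / 2" by simp
    then show ?thesis
      using zero_in_Th_halting_sentence[OF H(2,1)] Th_halting_sentence_subset[OF H(2,1)] H(3)
        has_below_half_if_approx_zero[OF _ approx(1)] has_below_half_if_approx_one[OF _ approx(2)]
      by auto
  qed
  moreover have "computable (\<lambda>n. has_below_half (query n))"
    unfolding query_def
    by (intro computable_comp1[OF computable_has_below_half] computable_comp1[OF f(1)]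
      computable_halting_query)
  ultimately show ?thesis by (simp add: computable_cong)
qed

theorem corollary2p6:
  shows "\<not> decidable_th Th_Fp"
  using decidable_Th_Fp_imp_computable_self_halting self_halting_not_computable by blast

end
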